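(* No graph of the form $G_6\star G_3$ (with $G_6$ any graph on $6$ vertices and $G_3$ any graph on $3$ vertices) is $3$-ball packable, except $C_6\star C_3$.
   Context: $C_n$ is the cycle on $n$ vertices ($C_3=K_3$), $\star$ the graph join. A $3$-ball in $\hat{\mathbb R}^3$ is a closed ball, closed exterior of an open ball with $\infty$, or a closed half-space with $\infty$; a $3$-ball packing is a collection of $3$-balls with disjoint interiors; its tangency graph joins balls meeting in exactly one point; a graph is $3$-ball packable if isomorphic to the tangency graph of some $3$-ball packing. *)

theory Defs
  imports "HOL-Analysis.Analysis"
begin

definition simple_graph :: "'v set \<Rightarrow> ('v \<Rightarrow> 'v \<Rightarrow> bool) \<Rightarrow> bool" where
  "simple_graph V E \<longleftrightarrow> finite V \<and>
     (\<forall>x y. E x y \<longrightarrow> x \<in> V \<and> y \<in> V \<and> x \<noteq> y) \<and> (\<forall>x y. E x y \<longrightarrow> E y x)"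

definition graph_iso :: "'v set \<Rightarrow> ('v \<Rightarrow> 'v \<Rightarrow> bool) \<Rightarrow> 'w set \<Rightarrow> ('w \<Rightarrow> 'w \<Rightarrow> bool) \<Rightarrow> bool" where
  "graph_iso V E W F \<longleftrightarrow> (\<exists>f. bij_betw f V W \<and> (\<forall>x\<in>V. \<forall>y\<in>V. E x y \<longleftrightarrow> F (f x) (f y)))"

definition join_verts :: "'a set \<Rightarrow> 'b set \<Rightarrow> ('a + 'b) set" where
  "join_verts V W = Inl ` V \<union> Inr ` W"

fun join_edges :: "'a set \<Rightarrow> ('a \<Rightarrow> 'a \<Rightarrow> bool) \<Rightarrow> 'b set \<Rightarrow> ('b \<Rightarrow> 'b \<Rightarrow> bool)
    \<Rightarrow> ('a + 'b) \<Rightarrow> ('a + 'b) \<Rightarrow> bool" where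
  "join_edges V E W F (Inl x) (Inl y) = E x y"
| "join_edges V E W F (Inr x) (Inr y) = F x y"
| "join_edges V E W F (Inl x) (Inr y) = (x \<in> V \<and> y \<in> W)"
| "join_edges V E W F (Inr x) (Inl y) = (x \<in> W \<and> y \<in> V)"

text \<open>The cycle C_n on vertices 0..n-1 (for n = 3 this is K_3).\<close>

definition cycle_verts :: "nat \<Rightarrow> nat set" where
  "cycle_verts n = {0..<n}"

definition cycle_edges :: "nat \<Rightarrow> nat \<Rightarrow> nat \<Rightarrow> bool" where
  "cycle_edges n x y \<longleftrightarrow> x < n \<and> y < n \<and> x \<noteq> y \<and> (y = Suc x mod n \<or> x = Suc y mod n)"

text \<open>Points of the one-point compactification: Some x for x in R^3, None for \<infinity>.\<close>

type_synonym xpoint = "(real ^ 3) option"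

datatype ball3 =
    Ball "real ^ 3" real
  | CoBall "real ^ 3" real      \<comment> \<open>closed exterior of an open ball, together with \<infinity>\<close>
  | Half "real ^ 3" real        \<comment> \<open>closed half-space {x. a \<bullet> x \<le> b}, together with \<infinity>\<close>

definition valid_ball :: "ball3 \<Rightarrow> bool" where
  "valid_ball B = (case B of Ball c r \<Rightarrow> r > 0 | CoBall c r \<Rightarrow> r > 0 | Half a b \<Rightarrow> a \<noteq> 0)"

fun ball_set :: "ball3 \<Rightarrow> xpoint set" where
  "ball_set (Ball c r) = Some ` cball c r"
| "ball_set (CoBall c r) = Some ` {x. dist x c \<ge> r} \<union> {None}"
| "ball_set (Half a b) = Some ` {x. a \<bullet> x \<le> b} \<union> {None}"

text \<open>Interior in the topology of the one-point compactification of R^3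
  (\<infinity> is an interior point of a ball exterior, but not of a half-space).\<close>

fun ball_interior :: "ball3 \<Rightarrow> xpoint set" where
  "ball_interior (Ball c r) = Some ` ball c r"
| "ball_interior (CoBall c r) = Some ` {x. dist x c > r} \<union> {None}"
| "ball_interior (Half a b) = Some ` {x. a \<bullet> x < b}"

definition tangent :: "ball3 \<Rightarrow> ball3 \<Rightarrow> bool" where
  "tangent B C \<longleftrightarrow> (\<exists>p. ball_set B \<inter> ball_set C = {p})"

text \<open>A graph is 3-ball packable if it is isomorphic to the tangency graph of a
  3-ball packing; equivalently, its vertices can be assigned pairwise distinct
  3-balls with pairwise disjoint interiors such that adjacency is tangency.\<close>

definition ball_packable :: "'v set \<Rightarrow> ('v \<Rightarrow> 'v \<Rightarrow> bool) \<Rightarrow> bool" where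
  "ball_packable V E \<longleftrightarrow> (\<exists>f :: 'v \<Rightarrow> ball3.
      (\<forall>v\<in>V. valid_ball (f v)) \<and>
      inj_on (\<lambda>v. ball_set (f v)) V \<and>
      (\<forall>v\<in>V. \<forall>w\<in>V. v \<noteq> w \<longrightarrow> ball_interior (f v) \<inter> ball_interior (f w) = {}) \<and>
      (\<forall>v\<in>V. \<forall>w\<in>V. v \<noteq> w \<longrightarrow> (E v w \<longleftrightarrow> tangent (f v) (f w))))"

end

theory Submission
  imports Defs
begin

text \<open>Each 3-ball is encoded by its inversive coordinates, a unit vector of the Lorentz space
  of signature \<open>(4, 1)\<close>; two 3-balls with disjoint interiors have Lorentz product at most \<open>-1\<close>,
  with equality exactly when they are tangent. In a packing of \<open>G\<^sub>6 \<star> G\<^sub>3\<close> every ball \<open>D\<^sub>v\<close>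
  of \<open>G\<^sub>6\<close> touches the three balls \<open>A, B, C\<close> of \<open>G\<^sub>3\<close>, so subtracting the vector \<open>W\<close> with
  product \<open>-1\<close> against \<open>A, B, C\<close> moves all \<open>D\<^sub>v\<close> into the orthogonal complement of
  \<open>A, B, C\<close>, a Euclidean plane. There they have the common norm \<open>\<rho> = 1 - \<langle>W, W\<rangle> \<le> 4\<close> and
  pairwise angles of at least \<open>\<pi>/3\<close>, so they are the vertices of a regular hexagon. This
  forces \<open>\<rho> = 4\<close>, which in turn forces \<open>A, B, C\<close> to be pairwise tangent, and the hexagon
  makes \<open>G\<^sub>6\<close> a 6-cycle. Conversely, \<open>C\<^sub>6 \<star> C\<^sub>3\<close> is realised by six unit balls around a
  seventh one, between two parallel planes.\<close>

section \<open>Pairs of 3-balls\<close>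

definition interiors_disjoint :: "ball3 \<Rightarrow> ball3 \<Rightarrow> bool" where
  "interiors_disjoint X Y \<longleftrightarrow> ball_interior X \<inter> ball_interior Y = {}"

lemma interiors_disjoint_commute: "interiors_disjoint X Y \<longleftrightarrow> interiors_disjoint Y X"
  unfolding interiors_disjoint_def by blast

lemma tangent_commute: "tangent X Y \<longleftrightarrow> tangent Y X"
  unfolding tangent_def by (simp add: Int_commute)

lemma Some_image_eq_singleton_iff: "(\<exists>p. Some ` S = {p}) \<longleftrightarrow> (\<exists>x. S = {x})"
proof
  assume "\<exists>p. Some ` S = {p}"
  then obtain p where p: "Some ` S = {p}" by blast
  then obtain x where x: "x \<in> S" by auto
  have "y = x" if "y \<in> S" for y
  proof -
    have "Some y = p" "Some x = p" using p x that by blast+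
    then show ?thesis by auto
  qed
  then show "\<exists>x. S = {x}" using x by blast
qed auto

lemma tangent_iff_singleton:
  assumes "ball_set X \<inter> ball_set Y = Some ` S"
  shows "tangent X Y \<longleftrightarrow> (\<exists>p. S = {p})"
  unfolding tangent_def assms by (rule Some_image_eq_singleton_iff)

lemma Some_image_insert_None_eq_singleton_iff: "(\<exists>p. Some ` S \<union> {None} = {p}) \<longleftrightarrow> S = {}"
  by auto

lemma point_on_segment_if_dist_sum:
  fixes a b x :: "'a::real_inner"
  assumes ax: "dist a x \<le> s" and xb: "dist x b \<le> t" and ab: "dist a b = s + t" and st: "s + t > 0"
  shows "x = a + (s / (s + t)) *\<^sub>R (b - a)"
proof -
  have "dist a b \<le> dist a x + dist x b" by (rule dist_triangle)
  then have "dist a x = s" "dist x b = t" using ax xb ab by linarith+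
  moreover from this have "norm (a - x) *\<^sub>R (x - b) = norm (x - b) *\<^sub>R (a - x)"
    using dist_triangle_eq[of a b x] ab by (simp add: dist_norm)
  ultimately have "s *\<^sub>R (x - b) = t *\<^sub>R (a - x)" by (simp add: dist_norm)
  then have "(s + t) *\<^sub>R x = t *\<^sub>R a + s *\<^sub>R b" by (simp add: algebra_simps)
  moreover have "(s + t) *\<^sub>R (a + (s / (s + t)) *\<^sub>R (b - a)) = t *\<^sub>R a + s *\<^sub>R b"
  proof -
    have "(s + t) *\<^sub>R (a + (s / (s + t)) *\<^sub>R (b - a)) =
        (s + t) *\<^sub>R a + ((s + t) * (s / (s + t))) *\<^sub>R (b - a)"
      by (simp only: scaleR_add_right scaleR_scaleR)
    also have "\<dots> = (s + t) *\<^sub>R a + s *\<^sub>R (b - a)" using st by simp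
    finally show ?thesis by (simp add: algebra_simps)
  qed
  ultimately have "(s + t) *\<^sub>R x = (s + t) *\<^sub>R (a + (s / (s + t)) *\<^sub>R (b - a))" by simp
  then show ?thesis using st by simp
qed

lemma scaleR_eq_if_norm_add_extremal:
  fixes A B :: "'a::real_inner"
  assumes "norm A \<le> r" and "r + norm B \<le> norm (A + B)" and "B \<noteq> 0"
  shows "A = (r / norm B) *\<^sub>R B"
proof -
  have "norm (A + B) \<le> norm A + norm B" by (rule norm_triangle_ineq)
  then have "norm A = r" "norm (A + B) = norm A + norm B" using assms by linarith+
  then have "norm B *\<^sub>R A = r *\<^sub>R B" using norm_triangle_eq by metis
  moreover have "A = (1 / norm B) *\<^sub>R (norm B *\<^sub>R A)" using assms(3) by simp
  ultimately show ?thesis by simp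
qed

lemma dist_point_on_segment:
  fixes a b :: "'a::real_normed_vector"
  assumes "0 \<le> t" "t \<le> 1"
  shows "dist a (a + t *\<^sub>R (b - a)) = t * dist a b"
    and "dist b (a + t *\<^sub>R (b - a)) = (1 - t) * dist a b"
proof -
  show "dist a (a + t *\<^sub>R (b - a)) = t * dist a b"
    using assms by (simp add: dist_norm norm_minus_commute)
  have "b - (a + t *\<^sub>R (b - a)) = (1 - t) *\<^sub>R (b - a)" by (simp add: algebra_simps)
  then show "dist b (a + t *\<^sub>R (b - a)) = (1 - t) * dist a b"
    using assms by (simp add: dist_norm norm_minus_commute)
qed

lemma interiors_disjoint_Ball_Ball_iff:
  assumes r: "r1 > 0" "r2 > 0"
  shows "interiors_disjoint (Ball c1 r1) (Ball c2 r2) \<longleftrightarrow> r1 + r2 \<le> dist c1 c2"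
proof
  assume "r1 + r2 \<le> dist c1 c2"
  then have "ball c1 r1 \<inter> ball c2 r2 = {}" by (rule disjoint_ballI)
  then show "interiors_disjoint (Ball c1 r1) (Ball c2 r2)"
    unfolding interiors_disjoint_def by auto
next
  assume disj: "interiors_disjoint (Ball c1 r1) (Ball c2 r2)"
  show "r1 + r2 \<le> dist c1 c2"
  proof (rule ccontr)
    assume "\<not> r1 + r2 \<le> dist c1 c2"
    then have lt: "dist c1 c2 < r1 + r2" by simp
    define t where "t = r1 / (r1 + r2)"
    have t: "0 < t" "t < 1" "t * (r1 + r2) = r1" "(1 - t) * (r1 + r2) = r2"
      using r by (simp_all add: t_def field_simps)
    define x where "x = c1 + t *\<^sub>R (c2 - c1)"
    have "dist c1 x = t * dist c1 c2" "dist c2 x = (1 - t) * dist c1 c2"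
      unfolding x_def using t by (intro dist_point_on_segment; simp)+
    moreover have "t * dist c1 c2 < t * (r1 + r2)" "(1 - t) * dist c1 c2 < (1 - t) * (r1 + r2)"
      using lt t by (intro mult_strict_left_mono; simp)+
    ultimately have "dist c1 x < r1" "dist c2 x < r2" using t by simp_all
    then have "x \<in> ball c1 r1" "x \<in> ball c2 r2" by simp_all
    then show False using disj unfolding interiors_disjoint_def ball_interior.simps by blast
  qed
qed

lemma tangent_Ball_Ball_iff:
  assumes r: "r1 > 0" "r2 > 0" and disj: "r1 + r2 \<le> dist c1 c2"
  shows "tangent (Ball c1 r1) (Ball c2 r2) \<longleftrightarrow> dist c1 c2 = r1 + r2"
proof
  assume tang: "tangent (Ball c1 r1) (Ball c2 r2)"
  show "dist c1 c2 = r1 + r2"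
  proof (rule ccontr)
    assume "dist c1 c2 \<noteq> r1 + r2"
    then have "cball c1 r1 \<inter> cball c2 r2 = {}" using disj by (intro disjoint_cballI) simp
    then have "ball_set (Ball c1 r1) \<inter> ball_set (Ball c2 r2) = {}" by auto
    then show False using tang unfolding tangent_def by auto
  qed
next
  assume d: "dist c1 c2 = r1 + r2"
  define t where "t = r1 / (r1 + r2)"
  have t: "0 \<le> t" "t \<le> 1" "t * (r1 + r2) = r1" "(1 - t) * (r1 + r2) = r2"
    using r by (simp_all add: t_def field_simps)
  define p where "p = c1 + t *\<^sub>R (c2 - c1)"
  have "dist c1 p = r1" "dist c2 p = r2"
    unfolding p_def using dist_point_on_segment[OF t(1,2), where a=c1 and b=c2] d t by simp_all
  moreover have "x = p" if "dist c1 x \<le> r1" "dist c2 x \<le> r2" for x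
    unfolding p_def t_def using that d r
    by (intro point_on_segment_if_dist_sum) (simp_all add: dist_commute)
  ultimately have "cball c1 r1 \<inter> cball c2 r2 = {p}" by auto
  then show "tangent (Ball c1 r1) (Ball c2 r2)" unfolding tangent_def by auto
qed

lemma exists_unit_direction:
  fixes v :: "'a::euclidean_space"
  obtains u where "norm u = 1" "v = norm v *\<^sub>R u"
proof (cases "v = 0")
  case True
  then show ?thesis using that vector_choose_size[of 1] by auto
next
  case False
  then show ?thesis using that[of "(1 / norm v) *\<^sub>R v"] by simp
qed

lemma interiors_disjoint_Ball_CoBall_iff:
  assumes r: "r1 > 0" "r2 > 0"
  shows "interiors_disjoint (Ball c1 r1) (CoBall c2 r2) \<longleftrightarrow> dist c1 c2 + r1 \<le> r2"
proof -
  have "interiors_disjoint (Ball c1 r1) (CoBall c2 r2) \<longleftrightarrow> ball c1 r1 \<inter> {x. r2 < dist x c2} = {}"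
    unfolding interiors_disjoint_def by auto
  also have "\<dots> \<longleftrightarrow> dist c1 c2 + r1 \<le> r2"
  proof
    assume d: "dist c1 c2 + r1 \<le> r2"
    have False if "dist c1 x < r1" "r2 < dist x c2" for x
    proof -
      have "dist x c2 \<le> dist c1 x + dist c1 c2" by (metis dist_commute dist_triangle)
      then show False using that d by linarith
    qed
    then show "ball c1 r1 \<inter> {x. r2 < dist x c2} = {}" by auto
  next
    assume empty: "ball c1 r1 \<inter> {x. r2 < dist x c2} = {}"
    show "dist c1 c2 + r1 \<le> r2"
    proof (rule ccontr)
      assume lt: "\<not> dist c1 c2 + r1 \<le> r2"
      obtain u where u: "norm u = 1" "c1 - c2 = dist c1 c2 *\<^sub>R u"
        using exists_unit_direction[of "c1 - c2"] by (metis dist_norm)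
      define M where "M = max 0 (r2 - dist c1 c2)"
      have "0 \<le> M" "r2 - dist c1 c2 \<le> M" "M < r1" using lt r by (auto simp: M_def)
      define t where "t = (r1 + M) / 2"
      have "2 * t = r1 + M" by (simp add: t_def)
      then have t: "0 \<le> t" "t < r1" "r2 < dist c1 c2 + t"
        using \<open>0 \<le> M\<close> \<open>r2 - dist c1 c2 \<le> M\<close> \<open>M < r1\<close> by linarith+
      define x where "x = c1 + t *\<^sub>R u"
      have "x - c2 = (c1 - c2) + t *\<^sub>R u" by (simp add: x_def algebra_simps)
      also have "\<dots> = (dist c1 c2 + t) *\<^sub>R u" by (simp only: u(2) scaleR_left_distrib)
      finally have "dist x c2 = \<bar>dist c1 c2 + t\<bar>" using u(1) by (simp add: dist_norm[of x c2])
      then have "dist x c2 = dist c1 c2 + t" using t(1) zero_le_dist[of c1 c2] by simp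
      moreover have "dist c1 x = t" using u(1) t by (simp add: x_def dist_norm)
      ultimately show False using empty t by auto
    qed
  qed
  finally show ?thesis .
qed

lemma tangent_Ball_CoBall_iff:
  assumes r: "r1 > 0" "r2 > 0" and disj: "dist c1 c2 + r1 \<le> r2"
  shows "tangent (Ball c1 r1) (CoBall c2 r2) \<longleftrightarrow> dist c1 c2 + r1 = r2 \<and> c1 \<noteq> c2"
proof -
  have tangent_iff: "tangent (Ball c1 r1) (CoBall c2 r2) \<longleftrightarrow>
      (\<exists>p. cball c1 r1 \<inter> {x. r2 \<le> dist x c2} = {p})"
    by (rule tangent_iff_singleton) auto
  show ?thesis
  proof
    assume "tangent (Ball c1 r1) (CoBall c2 r2)"
    then obtain p where p: "cball c1 r1 \<inter> {x. r2 \<le> dist x c2} = {p}" using tangent_iff by blast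
    have "dist p c2 \<le> dist c1 p + dist c1 c2" by (metis dist_commute dist_triangle)
    moreover have "dist c1 p \<le> r1" "r2 \<le> dist p c2" using p by auto
    ultimately have eq: "dist c1 c2 + r1 = r2" using disj by linarith
    moreover have "c1 \<noteq> c2"
    proof
      assume "c1 = c2"
      moreover obtain u :: "real^3" where u: "norm u = 1" using vector_choose_size[of 1] by auto
      ultimately have "c1 + r1 *\<^sub>R u \<in> {p}" "c1 - r1 *\<^sub>R u \<in> {p}"
        using eq r p[symmetric] by (auto simp: dist_norm)
      then have "(c1 + r1 *\<^sub>R u) - (c1 - r1 *\<^sub>R u) = 0" by simp
      moreover have "(c1 + r1 *\<^sub>R u) - (c1 - r1 *\<^sub>R u) = (r1 + r1) *\<^sub>R u"
        by (simp only: scaleR_left_distrib) (simp add: algebra_simps)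
      ultimately show False using u r by simp
    qed
    ultimately show "dist c1 c2 + r1 = r2 \<and> c1 \<noteq> c2" by blast
  next
    assume h: "dist c1 c2 + r1 = r2 \<and> c1 \<noteq> c2"
    define d where "d = dist c1 c2"
    have d: "d > 0" using h by (simp add: d_def)
    define p where "p = c1 + (r1 / d) *\<^sub>R (c1 - c2)"
    have "p - c2 = (1 + r1 / d) *\<^sub>R (c1 - c2)" by (simp add: p_def algebra_simps)
    then have "dist p c2 = (1 + r1 / d) * d" using d r by (simp add: dist_norm d_def)
    also have "\<dots> = r2" using d h by (simp add: field_simps d_def)
    finally have "dist p c2 = r2" .
    moreover have "dist c1 p = r1" using d r by (simp add: p_def dist_norm d_def)
    moreover have "x = p" if x: "dist c1 x \<le> r1" "r2 \<le> dist x c2" for x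
    proof -
      have "x - c1 = (r1 / norm (c1 - c2)) *\<^sub>R (c1 - c2)"
        using x h by (intro scaleR_eq_if_norm_add_extremal) (simp_all add: dist_norm norm_minus_commute)
      then show "x = p" by (simp add: p_def d_def dist_norm algebra_simps)
    qed
    ultimately have "cball c1 r1 \<inter> {x. r2 \<le> dist x c2} = {p}" by auto
    then show "tangent (Ball c1 r1) (CoBall c2 r2)" using tangent_iff by blast
  qed
qed

lemma interiors_disjoint_Ball_Half_iff:
  assumes r: "r > 0" and a: "a \<noteq> 0"
  shows "interiors_disjoint (Ball c r) (Half a b) \<longleftrightarrow> r * norm a \<le> a \<bullet> c - b"
proof -
  have na: "norm a > 0" using a by simp
  have "interiors_disjoint (Ball c r) (Half a b) \<longleftrightarrow> ball c r \<inter> {x. a \<bullet> x < b} = {}"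
    unfolding interiors_disjoint_def by auto
  also have "\<dots> \<longleftrightarrow> r * norm a \<le> a \<bullet> c - b"
  proof
    assume h: "r * norm a \<le> a \<bullet> c - b"
    have False if x: "dist c x < r" "a \<bullet> x < b" for x
    proof -
      have "- (a \<bullet> (x - c)) \<le> norm a * norm (x - c)"
        using Cauchy_Schwarz_ineq2[of a "x - c"] by linarith
      moreover have "norm a * norm (x - c) < r * norm a"
        using x na by (simp add: dist_norm norm_minus_commute mult.commute)
      ultimately show False using x(2) h by (simp add: inner_diff_right)
    qed
    then show "ball c r \<inter> {x. a \<bullet> x < b} = {}" by auto
  next
    assume empty: "ball c r \<inter> {x. a \<bullet> x < b} = {}"
    show "r * norm a \<le> a \<bullet> c - b"
    proof (rule ccontr)
      assume "\<not> r * norm a \<le> a \<bullet> c - b"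
      define m where "m = (a \<bullet> c - b) / norm a"
      have "m < r" using \<open>\<not> r * norm a \<le> a \<bullet> c - b\<close> na by (simp add: m_def field_simps)
      define t where "t = (max m (- r) + r) / 2"
      have "2 * t = max m (- r) + r" by (simp add: t_def)
      then have t: "- r < t" "t < r" "m < t" using \<open>m < r\<close> r by (auto simp: max_def split: if_split_asm)
      define x where "x = c - (t / norm a) *\<^sub>R a"
      have "dist c x = \<bar>t\<bar>" using na by (simp add: x_def dist_norm)
      moreover have "a \<bullet> x = a \<bullet> c - t * norm a"
        using na by (simp add: x_def inner_diff_right power2_norm_eq_inner[symmetric] power2_eq_square)
      moreover have "a \<bullet> c - t * norm a < b"
        using t(3) na by (simp add: m_def field_simps)
      ultimately have "x \<in> ball c r \<inter> {x. a \<bullet> x < b}" using t by (simp add: abs_less_iff)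
      then show False using empty by blast
    qed
  qed
  finally show ?thesis .
qed

lemma tangent_Ball_Half_iff:
  assumes r: "r > 0" and a: "a \<noteq> 0" and disj: "r * norm a \<le> a \<bullet> c - b"
  shows "tangent (Ball c r) (Half a b) \<longleftrightarrow> r * norm a = a \<bullet> c - b"
proof -
  have na: "norm a > 0" using a by simp
  have tangent_iff: "tangent (Ball c r) (Half a b) \<longleftrightarrow> (\<exists>p. cball c r \<inter> {x. a \<bullet> x \<le> b} = {p})"
    by (rule tangent_iff_singleton) auto
  show ?thesis
  proof
    assume "tangent (Ball c r) (Half a b)"
    then obtain p where p: "cball c r \<inter> {x. a \<bullet> x \<le> b} = {p}" using tangent_iff by blast
    then have "dist c p \<le> r" "a \<bullet> p \<le> b" by auto
    moreover have "- (a \<bullet> (p - c)) \<le> norm a * norm (p - c)"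
      using Cauchy_Schwarz_ineq2[of a "p - c"] by linarith
    moreover have "norm a * norm (p - c) \<le> r * norm a"
      using \<open>dist c p \<le> r\<close> na by (simp add: dist_norm norm_minus_commute mult.commute)
    ultimately show "r * norm a = a \<bullet> c - b" using disj by (simp add: inner_diff_right)
  next
    assume eq: "r * norm a = a \<bullet> c - b"
    define k where "k = r / norm a"
    define p where "p = c - k *\<^sub>R a"
    have "dist c p = r" using na r by (simp add: p_def k_def dist_norm)
    moreover have "a \<bullet> p = b"
      using na eq by (simp add: p_def k_def inner_diff_right power2_norm_eq_inner[symmetric] power2_eq_square)
    moreover have "x = p" if x: "dist c x \<le> r" "a \<bullet> x \<le> b" for x
    proof -
      define A where "A = x - c"
      have "(norm A)\<^sup>2 \<le> r\<^sup>2"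
        using x(1) r by (simp add: A_def dist_norm norm_minus_commute power_mono)
      moreover have "2 * k * (a \<bullet> A) \<le> 2 * k * (- r * norm a)"
        using x(2) eq r na by (intro mult_left_mono) (auto simp: A_def k_def inner_diff_right)
      moreover have "k\<^sup>2 * (norm a)\<^sup>2 = r\<^sup>2" using na by (simp add: k_def power_divide)
      moreover have "(norm (A + k *\<^sub>R a))\<^sup>2 = (norm A)\<^sup>2 + 2 * k * (a \<bullet> A) + k\<^sup>2 * (norm a)\<^sup>2"
        unfolding power2_norm_eq_inner
        by (simp add: inner_add_left inner_add_right inner_commute power2_eq_square algebra_simps)
      moreover have "r\<^sup>2 + 2 * k * (- r * norm a) + r\<^sup>2 = 0"
        using na by (simp add: k_def power2_eq_square)
      ultimately have "(norm (A + k *\<^sub>R a))\<^sup>2 \<le> 0" by linarith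
      then have "A + k *\<^sub>R a = 0" by simp
      then show "x = p" by (simp add: p_def A_def algebra_simps)
    qed
    ultimately have "cball c r \<inter> {x. a \<bullet> x \<le> b} = {p}" by auto
    then show "tangent (Ball c r) (Half a b)" using tangent_iff by blast
  qed
qed

lemma inner_sgn_iff:
  assumes "a \<noteq> 0"
  shows "a \<bullet> x < b \<longleftrightarrow> sgn a \<bullet> x < b / norm a"
    and "a \<bullet> x \<le> b \<longleftrightarrow> sgn a \<bullet> x \<le> b / norm a"
proof -
  have "norm a > 0" "sgn a \<bullet> x = (a \<bullet> x) / norm a" using assms
    by (simp_all add: sgn_div_norm divide_inverse mult.commute)
  then show "a \<bullet> x < b \<longleftrightarrow> sgn a \<bullet> x < b / norm a" "a \<bullet> x \<le> b \<longleftrightarrow> sgn a \<bullet> x \<le> b / norm a"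
    by (simp_all add: divide_less_cancel divide_le_cancel)
qed

lemma interiors_disjoint_Half_Half_iff:
  assumes a1: "a1 \<noteq> 0" and a2: "a2 \<noteq> 0"
  shows "interiors_disjoint (Half a1 b1) (Half a2 b2) \<longleftrightarrow>
    sgn a2 = - sgn a1 \<and> b1 / norm a1 + b2 / norm a2 \<le> 0"
proof -
  define n1 n2 h1 h2 where "n1 = sgn a1" "n2 = sgn a2" "h1 = b1 / norm a1" "h2 = b2 / norm a2"
  have n: "n1 \<bullet> n1 = 1" "n2 \<bullet> n2 = 1"
    using a1 a2 by (simp_all add: n1_n2_h1_h2_def norm_eq_1[symmetric] norm_sgn)
  have "interiors_disjoint (Half a1 b1) (Half a2 b2) \<longleftrightarrow> {x. n1 \<bullet> x < h1} \<inter> {x. n2 \<bullet> x < h2} = {}"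
    unfolding interiors_disjoint_def n1_n2_h1_h2_def using inner_sgn_iff[OF a1] inner_sgn_iff[OF a2]
    by auto
  also have "\<dots> \<longleftrightarrow> n2 = - n1 \<and> h1 + h2 \<le> 0"
  proof
    assume empty: "{x. n1 \<bullet> x < h1} \<inter> {x. n2 \<bullet> x < h2} = {}"
    show "n2 = - n1 \<and> h1 + h2 \<le> 0"
    proof (cases "n1 + n2 = 0")
      case False
      \<comment> \<open>go far in the direction opposite to the bisector of the two normals\<close>
      define k where "k = 1 + n1 \<bullet> n2"
      have "2 * k = (n1 + n2) \<bullet> (n1 + n2)"
        using n by (simp add: k_def inner_add_left inner_add_right inner_commute)
      moreover have "(n1 + n2) \<bullet> (n1 + n2) > 0" using False by simp
      ultimately have k: "k > 0" by linarith
      define T where "T = \<bar>h1\<bar> + \<bar>h2\<bar> + 1"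
      define x where "x = (- (T / k)) *\<^sub>R (n1 + n2)"
      have "n1 \<bullet> (n1 + n2) = k" "n2 \<bullet> (n1 + n2) = k"
        using n by (simp_all add: k_def inner_add_right inner_commute)
      then have "n1 \<bullet> x = - (T / k) * k" "n2 \<bullet> x = - (T / k) * k"
        unfolding x_def inner_scaleR_right by simp_all
      then have "n1 \<bullet> x = - T" "n2 \<bullet> x = - T" using k by simp_all
      then have "n1 \<bullet> x < h1" "n2 \<bullet> x < h2" by (simp_all add: T_def)
      then show ?thesis using empty by auto
    next
      case True
      then have opp: "n2 = - n1" by (simp add: add_eq_0_iff)
      define x where "x = ((h1 - h2) / 2) *\<^sub>R n1"
      have "n1 \<bullet> x < h1" "n2 \<bullet> x < h2" if "h1 + h2 > 0"
        using n that opp by (simp_all add: x_def field_simps)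
      then show ?thesis using empty opp by force
    qed
  qed auto
  finally show ?thesis unfolding n1_n2_h1_h2_def .
qed

lemma tangent_Half_Half_iff:
  assumes a1: "a1 \<noteq> 0" and a2: "a2 \<noteq> 0"
    and opp: "sgn a2 = - sgn a1" and disj: "b1 / norm a1 + b2 / norm a2 \<le> 0"
  shows "tangent (Half a1 b1) (Half a2 b2) \<longleftrightarrow> b1 / norm a1 + b2 / norm a2 < 0"
proof -
  define n h1 h2 where "n = sgn a1" "h1 = b1 / norm a1" "h2 = b2 / norm a2"
  have n: "n \<bullet> n = 1" using a1 by (simp add: n_h1_h2_def norm_eq_1[symmetric] norm_sgn)
  have "ball_set (Half a1 b1) \<inter> ball_set (Half a2 b2) =
      Some ` ({x. n \<bullet> x \<le> h1} \<inter> {x. - (n \<bullet> x) \<le> h2}) \<union> {None}"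
    using inner_sgn_iff(2)[OF a1] inner_sgn_iff(2)[OF a2] opp by (auto simp: n_h1_h2_def)
  then have "tangent (Half a1 b1) (Half a2 b2) \<longleftrightarrow> {x. n \<bullet> x \<le> h1} \<inter> {x. - (n \<bullet> x) \<le> h2} = {}"
    unfolding tangent_def by (simp only: Some_image_insert_None_eq_singleton_iff)
  also have "\<dots> \<longleftrightarrow> h1 + h2 < 0"
  proof
    assume empty: "{x. n \<bullet> x \<le> h1} \<inter> {x. - (n \<bullet> x) \<le> h2} = {}"
    have "h1 + h2 \<noteq> 0"
    proof
      assume "h1 + h2 = 0"
      then have "h1 *\<^sub>R n \<in> {x. n \<bullet> x \<le> h1} \<inter> {x. - (n \<bullet> x) \<le> h2}" using n by simp
      then show False using empty by blast
    qed
    moreover have "h1 + h2 \<le> 0" using disj by (simp add: n_h1_h2_def)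
    ultimately show "h1 + h2 < 0" by simp
  qed auto
  finally show ?thesis unfolding n_h1_h2_def .
qed

lemma not_interiors_disjoint_CoBall_CoBall: "\<not> interiors_disjoint (CoBall c1 r1) (CoBall c2 r2)"
  unfolding interiors_disjoint_def by auto

lemma not_interiors_disjoint_CoBall_Half:
  assumes r: "r > 0" and a: "a \<noteq> 0"
  shows "\<not> interiors_disjoint (CoBall c r) (Half a b)"
proof
  assume disj: "interiors_disjoint (CoBall c r) (Half a b)"
  have na: "norm a > 0" using a by simp
  \<comment> \<open>a point far out in direction \<open>- a\<close> lies in both interiors\<close>
  define t where "t = (\<bar>a \<bullet> c\<bar> + \<bar>b\<bar> + 1) / (norm a)\<^sup>2 + (r + 1) / norm a"
  have t: "t * norm a = (\<bar>a \<bullet> c\<bar> + \<bar>b\<bar> + 1) / norm a + (r + 1)"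
    "t * (norm a)\<^sup>2 = \<bar>a \<bullet> c\<bar> + \<bar>b\<bar> + 1 + (r + 1) * norm a"
    using na by (simp_all add: t_def field_simps power2_eq_square)
  have "t > 0" using na r unfolding t_def by (intro add_pos_pos) auto
  define x where "x = c - t *\<^sub>R a"
  have "dist x c = t * norm a" using \<open>t > 0\<close> by (simp add: x_def dist_norm)
  moreover have "(\<bar>a \<bullet> c\<bar> + \<bar>b\<bar> + 1) / norm a \<ge> 0" using na by simp
  ultimately have "dist x c > r" using t(1) by linarith
  moreover have "a \<bullet> x = a \<bullet> c - t * (norm a)\<^sup>2"
    by (simp add: x_def inner_diff_right power2_norm_eq_inner)
  then have "a \<bullet> x < b" using t(2) na r
    by (smt (verit) abs_ge_self abs_ge_minus_self mult_pos_pos)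
  ultimately show False using disj unfolding interiors_disjoint_def by auto
qed

definition ball_packing :: "'v set \<Rightarrow> ('v \<Rightarrow> 'v \<Rightarrow> bool) \<Rightarrow> ('v \<Rightarrow> ball3) \<Rightarrow> bool" where
  "ball_packing V E f \<longleftrightarrow> (\<forall>v\<in>V. valid_ball (f v)) \<and> inj_on (\<lambda>v. ball_set (f v)) V \<and>
     (\<forall>v\<in>V. \<forall>w\<in>V. v \<noteq> w \<longrightarrow> interiors_disjoint (f v) (f w)) \<and>
     (\<forall>v\<in>V. \<forall>w\<in>V. v \<noteq> w \<longrightarrow> (E v w \<longleftrightarrow> tangent (f v) (f w)))"

lemma ball_packable_iff: "ball_packable V E \<longleftrightarrow> (\<exists>f. ball_packing V E f)"
  unfolding ball_packable_def ball_packing_def interiors_disjoint_def ..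

definition packed_pair :: "('v \<Rightarrow> 'v \<Rightarrow> bool) \<Rightarrow> ('v \<Rightarrow> ball3) \<Rightarrow> 'v \<Rightarrow> 'v \<Rightarrow> bool" where
  "packed_pair E f v w \<longleftrightarrow> interiors_disjoint (f v) (f w) \<and> ball_set (f v) \<noteq> ball_set (f w) \<and>
     (E v w \<longleftrightarrow> tangent (f v) (f w))"

lemma packed_pair_commute:
  assumes "\<And>x y. E x y \<longleftrightarrow> E y x" and "packed_pair E f v w"
  shows "packed_pair E f w v"
  using assms unfolding packed_pair_def by (auto simp: interiors_disjoint_commute tangent_commute)

lemma ball_packingI:
  assumes "\<And>v. v \<in> V \<Longrightarrow> valid_ball (f v)"
    and "\<And>v w. v \<in> V \<Longrightarrow> w \<in> V \<Longrightarrow> v \<noteq> w \<Longrightarrow> packed_pair E f v w"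
  shows "ball_packing V E f"
  using assms unfolding ball_packing_def packed_pair_def inj_on_def by blast

section \<open>Inversive coordinates\<close>

type_synonym lvec = "((real^3) \<times> real) \<times> real"

definition lorentz_inner :: "lvec \<Rightarrow> lvec \<Rightarrow> real" where
  "lorentz_inner p q = fst p \<bullet> fst q - snd p * snd q"

lemma lorentz_inner_commute: "lorentz_inner p q = lorentz_inner q p"
  unfolding lorentz_inner_def by (simp add: inner_commute mult.commute)

lemma lorentz_inner_add_left: "lorentz_inner (p + q) r = lorentz_inner p r + lorentz_inner q r"
  and lorentz_inner_add_right: "lorentz_inner r (p + q) = lorentz_inner r p + lorentz_inner r q"
  and lorentz_inner_diff_left: "lorentz_inner (p - q) r = lorentz_inner p r - lorentz_inner q r"
  and lorentz_inner_diff_right: "lorentz_inner r (p - q) = lorentz_inner r p - lorentz_inner r q"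
  and lorentz_inner_scaleR_left: "lorentz_inner (k *\<^sub>R p) q = k * lorentz_inner p q"
  and lorentz_inner_scaleR_right: "lorentz_inner p (k *\<^sub>R q) = k * lorentz_inner p q"
  and lorentz_inner_minus_left: "lorentz_inner (- p) q = - lorentz_inner p q"
  and lorentz_inner_minus_right: "lorentz_inner p (- q) = - lorentz_inner p q"
  and lorentz_inner_zero_left: "lorentz_inner 0 q = 0"
  and lorentz_inner_zero_right: "lorentz_inner p 0 = 0"
  unfolding lorentz_inner_def
  by (simp_all add: inner_add_left inner_add_right inner_diff_left inner_diff_right algebra_simps)

lemmas lorentz_inner_simps = lorentz_inner_add_left lorentz_inner_add_right
  lorentz_inner_diff_left lorentz_inner_diff_right lorentz_inner_scaleR_left
  lorentz_inner_scaleR_right lorentz_inner_minus_left lorentz_inner_minus_right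
  lorentz_inner_zero_left lorentz_inner_zero_right

definition sphere_coords :: "real^3 \<Rightarrow> real \<Rightarrow> lvec" where
  "sphere_coords c r = (((1 / r) *\<^sub>R c, (c \<bullet> c - r\<^sup>2 - 1) / (2 * r)), (c \<bullet> c - r\<^sup>2 + 1) / (2 * r))"

fun inv_coords :: "ball3 \<Rightarrow> lvec" where
  "inv_coords (Ball c r) = sphere_coords c r"
| "inv_coords (CoBall c r) = - sphere_coords c r"
| "inv_coords (Half a b) = ((- sgn a, - (b / norm a)), - (b / norm a))"

definition bend :: "lvec \<Rightarrow> real" where
  "bend p = snd p - snd (fst p)"

lemma bend_uminus: "bend (- p) = - bend p"
  unfolding bend_def by simp

lemma bend_inv_coords:
  assumes "r > 0"
  shows "bend (inv_coords (Ball c r)) = 1 / r"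
    and "bend (inv_coords (CoBall c r)) = - 1 / r"
    and "bend (inv_coords (Half a b)) = 0"
  using assms by (simp_all add: bend_def sphere_coords_def field_simps)

lemma dist_power2_eq_inner: "(dist c1 c2)\<^sup>2 = c1 \<bullet> c1 - 2 * (c1 \<bullet> c2) + c2 \<bullet> c2"
  for c1 c2 :: "'a::real_inner"
  by (simp add: dist_norm power2_norm_eq_inner inner_diff_left inner_diff_right inner_commute)

lemma lorentz_inner_inv_coords_Ball_Ball:
  assumes "r1 > 0" "r2 > 0"
  shows "lorentz_inner (inv_coords (Ball c1 r1)) (inv_coords (Ball c2 r2)) =
    (r1\<^sup>2 + r2\<^sup>2 - (dist c1 c2)\<^sup>2) / (2 * r1 * r2)"
  using assms unfolding lorentz_inner_def dist_power2_eq_inner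
  by (simp add: sphere_coords_def field_simps power2_eq_square)

lemma lorentz_inner_inv_coords_Ball_Half:
  assumes "r > 0" "a \<noteq> 0"
  shows "lorentz_inner (inv_coords (Ball c r)) (inv_coords (Half a b)) = (b - a \<bullet> c) / (r * norm a)"
  using assms unfolding lorentz_inner_def
  by (simp add: sphere_coords_def field_simps sgn_div_norm inner_commute power2_eq_square)

lemma lorentz_inner_inv_coords_Half_Half:
  "lorentz_inner (inv_coords (Half a1 b1)) (inv_coords (Half a2 b2)) = sgn a1 \<bullet> sgn a2"
  unfolding lorentz_inner_def by simp

lemma lorentz_inner_inv_coords_self:
  assumes "valid_ball X"
  shows "lorentz_inner (inv_coords X) (inv_coords X) = 1"
proof (cases X)
  case (Ball c r)
  then show ?thesis using assms
    by (simp add: valid_ball_def lorentz_inner_def sphere_coords_def field_simps power2_eq_square)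
next
  case (CoBall c r)
  then show ?thesis using assms
    by (simp add: valid_ball_def lorentz_inner_def sphere_coords_def field_simps power2_eq_square)
next
  case (Half a b)
  then show ?thesis using assms
    by (simp add: valid_ball_def lorentz_inner_def norm_eq_1[symmetric] norm_sgn)
qed

definition inv_coords_separated :: "ball3 \<Rightarrow> ball3 \<Rightarrow> bool" where
  "inv_coords_separated X Y \<longleftrightarrow> lorentz_inner (inv_coords X) (inv_coords Y) \<le> -1 \<and>
     (tangent X Y \<longleftrightarrow>
        lorentz_inner (inv_coords X) (inv_coords Y) = -1 \<and> inv_coords X \<noteq> - inv_coords Y)"

lemma inv_coords_separated_commute: "inv_coords_separated X Y \<Longrightarrow> inv_coords_separated Y X"
  unfolding inv_coords_separated_def by (metis lorentz_inner_commute tangent_commute minus_minus)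

lemma inv_coords_separated_Ball_Ball:
  assumes r: "r1 > 0" "r2 > 0" and disj: "interiors_disjoint (Ball c1 r1) (Ball c2 r2)"
  shows "inv_coords_separated (Ball c1 r1) (Ball c2 r2)"
proof -
  define d where "d = dist c1 c2"
  have d: "r1 + r2 \<le> d" using interiors_disjoint_Ball_Ball_iff[OF r] disj by (simp add: d_def)
  have tang: "tangent (Ball c1 r1) (Ball c2 r2) \<longleftrightarrow> d = r1 + r2"
    using tangent_Ball_Ball_iff[OF r] d by (simp add: d_def)
  have p: "2 * r1 * r2 > 0" using r by simp
  have "(r1 + r2)\<^sup>2 \<le> d\<^sup>2" using d r by (intro power_mono) auto
  then have le: "(r1\<^sup>2 + r2\<^sup>2 - d\<^sup>2) / (2 * r1 * r2) \<le> -1"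
    using p by (simp add: divide_le_eq power2_eq_square algebra_simps)
  have "(r1\<^sup>2 + r2\<^sup>2 - d\<^sup>2) / (2 * r1 * r2) = -1 \<longleftrightarrow> r1\<^sup>2 + r2\<^sup>2 - d\<^sup>2 = - (2 * r1 * r2)"
    using p r by (simp add: divide_eq_eq)
  also have "\<dots> \<longleftrightarrow> d\<^sup>2 = (r1 + r2)\<^sup>2" by (smt (verit) power2_sum)
  also have "\<dots> \<longleftrightarrow> d = r1 + r2" using d r by (simp add: power2_eq_iff)
  finally have eq: "(r1\<^sup>2 + r2\<^sup>2 - d\<^sup>2) / (2 * r1 * r2) = -1 \<longleftrightarrow> d = r1 + r2" .
  have "inv_coords (Ball c1 r1) \<noteq> - inv_coords (Ball c2 r2)"
  proof
    assume "inv_coords (Ball c1 r1) = - inv_coords (Ball c2 r2)"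
    then have "bend (inv_coords (Ball c1 r1)) = - bend (inv_coords (Ball c2 r2))"
      by (simp add: bend_uminus)
    then have "1 / r1 = - (1 / r2)" using r by (simp only: bend_inv_coords)
    then show False using r by (smt (verit) divide_pos_pos)
  qed
  then show ?thesis
    using le eq tang unfolding inv_coords_separated_def lorentz_inner_inv_coords_Ball_Ball[OF r] d_def[symmetric]
    by auto
qed

lemma inv_coords_separated_Ball_CoBall:
  assumes r: "r1 > 0" "r2 > 0" and disj: "interiors_disjoint (Ball c1 r1) (CoBall c2 r2)"
  shows "inv_coords_separated (Ball c1 r1) (CoBall c2 r2)"
proof -
  define d where "d = dist c1 c2"
  have d: "d + r1 \<le> r2" "d \<ge> 0" using interiors_disjoint_Ball_CoBall_iff[OF r] disj by (simp_all add: d_def)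
  have tang: "tangent (Ball c1 r1) (CoBall c2 r2) \<longleftrightarrow> d + r1 = r2 \<and> c1 \<noteq> c2"
    using tangent_Ball_CoBall_iff[OF r] d by (simp add: d_def)
  have prod: "lorentz_inner (inv_coords (Ball c1 r1)) (inv_coords (CoBall c2 r2)) =
      - ((r1\<^sup>2 + r2\<^sup>2 - d\<^sup>2) / (2 * r1 * r2))"
    using lorentz_inner_inv_coords_Ball_Ball[OF r, of c1 c2]
    by (simp add: lorentz_inner_minus_right d_def)
  have p: "2 * r1 * r2 > 0" using r by simp
  have "d\<^sup>2 \<le> (r2 - r1)\<^sup>2" using d by (intro power_mono) auto
  then have le: "- ((r1\<^sup>2 + r2\<^sup>2 - d\<^sup>2) / (2 * r1 * r2)) \<le> -1"
    using p by (simp add: le_divide_eq power2_eq_square algebra_simps)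
  have "- ((r1\<^sup>2 + r2\<^sup>2 - d\<^sup>2) / (2 * r1 * r2)) = -1 \<longleftrightarrow> r1\<^sup>2 + r2\<^sup>2 - d\<^sup>2 = 2 * r1 * r2"
    using p r by (simp add: divide_eq_eq)
  also have "\<dots> \<longleftrightarrow> d\<^sup>2 = (r2 - r1)\<^sup>2" by (auto simp: power2_diff algebra_simps)
  also have "\<dots> \<longleftrightarrow> d + r1 = r2" using d by (auto simp: power2_eq_iff)
  finally have eq: "- ((r1\<^sup>2 + r2\<^sup>2 - d\<^sup>2) / (2 * r1 * r2)) = -1 \<longleftrightarrow> d + r1 = r2" .
  have antipodal: "inv_coords (Ball c1 r1) = - inv_coords (CoBall c2 r2) \<longleftrightarrow> c1 = c2 \<and> r1 = r2"
  proof
    assume h: "inv_coords (Ball c1 r1) = - inv_coords (CoBall c2 r2)"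
    then have "bend (inv_coords (Ball c1 r1)) = - bend (inv_coords (CoBall c2 r2))"
      by (simp only: bend_uminus)
    then have "1 / r1 = 1 / r2" using r by (simp only: bend_inv_coords)
    then have "r1 = r2" by simp
    moreover have "(1 / r1) *\<^sub>R c1 = (1 / r2) *\<^sub>R c2"
      using arg_cong[OF h, of "\<lambda>p. fst (fst p)"] by (simp add: sphere_coords_def)
    ultimately show "c1 = c2 \<and> r1 = r2" using r by simp
  qed auto
  have "c1 = c2 \<Longrightarrow> d = 0" by (simp add: d_def)
  then show ?thesis
    using le eq tang antipodal unfolding inv_coords_separated_def prod by auto
qed

lemma inv_coords_separated_Ball_Half:
  assumes r: "r > 0" and a: "a \<noteq> 0" and disj: "interiors_disjoint (Ball c r) (Half a b)"
  shows "inv_coords_separated (Ball c r) (Half a b)"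
proof -
  have d: "r * norm a \<le> a \<bullet> c - b" using interiors_disjoint_Ball_Half_iff[OF r a] disj by simp
  have p: "r * norm a > 0" using r a by simp
  have "(b - a \<bullet> c) / (r * norm a) \<le> -1" using p d by (simp add: divide_le_eq)
  moreover have "(b - a \<bullet> c) / (r * norm a) = -1 \<longleftrightarrow> r * norm a = a \<bullet> c - b"
    using p by (auto simp: divide_eq_eq)
  moreover have "inv_coords (Ball c r) \<noteq> - inv_coords (Half a b)"
  proof
    assume "inv_coords (Ball c r) = - inv_coords (Half a b)"
    then have "bend (inv_coords (Ball c r)) = - bend (inv_coords (Half a b))" by (simp only: bend_uminus)
    then show False using r by (simp only: bend_inv_coords) simp
  qed
  ultimately show ?thesis
    using tangent_Ball_Half_iff[OF r a d]
    unfolding inv_coords_separated_def lorentz_inner_inv_coords_Ball_Half[OF r a] by auto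
qed

lemma inv_coords_separated_Half_Half:
  assumes a1: "a1 \<noteq> 0" and a2: "a2 \<noteq> 0" and disj: "interiors_disjoint (Half a1 b1) (Half a2 b2)"
  shows "inv_coords_separated (Half a1 b1) (Half a2 b2)"
proof -
  have d: "sgn a2 = - sgn a1" "b1 / norm a1 + b2 / norm a2 \<le> 0"
    using interiors_disjoint_Half_Half_iff[OF a1 a2] disj by auto
  have "sgn a1 \<bullet> sgn a1 = 1" using a1 by (simp add: norm_eq_1[symmetric] norm_sgn)
  then have "lorentz_inner (inv_coords (Half a1 b1)) (inv_coords (Half a2 b2)) = -1"
    using d by (simp only: lorentz_inner_inv_coords_Half_Half) simp
  moreover have "inv_coords (Half a1 b1) = - inv_coords (Half a2 b2) \<longleftrightarrow> b1 / norm a1 + b2 / norm a2 = 0"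
    using d by (auto simp: add_eq_0_iff)
  ultimately show ?thesis
    using tangent_Half_Half_iff[OF a1 a2 d] d unfolding inv_coords_separated_def by auto
qed

lemma interiors_disjoint_imp_inv_coords_separated:
  assumes vX: "valid_ball X" and vY: "valid_ball Y" and disj: "interiors_disjoint X Y"
  shows "inv_coords_separated X Y"
proof -
  have disj': "interiors_disjoint Y X" using disj by (simp add: interiors_disjoint_commute)
  show ?thesis
  proof (cases X)
    case (Ball c1 r1)
    then have r1: "r1 > 0" using vX by (simp add: valid_ball_def)
    show ?thesis
      using vY disj Ball inv_coords_separated_Ball_Ball[OF r1] inv_coords_separated_Ball_CoBall[OF r1]
        inv_coords_separated_Ball_Half[OF r1]
      by (cases Y) (simp_all add: valid_ball_def)
  next
    case (CoBall c1 r1)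
    then have r1: "r1 > 0" using vX by (simp add: valid_ball_def)
    show ?thesis
      using vY disj disj' CoBall not_interiors_disjoint_CoBall_CoBall
        not_interiors_disjoint_CoBall_Half[OF r1]
        inv_coords_separated_commute[OF inv_coords_separated_Ball_CoBall[OF _ r1]]
      by (cases Y) (simp_all add: valid_ball_def)
  next
    case (Half a1 b1)
    then have a1: "a1 \<noteq> 0" using vX by (simp add: valid_ball_def)
    show ?thesis
      using vY disj disj' Half not_interiors_disjoint_CoBall_Half[OF _ a1]
        inv_coords_separated_commute[OF inv_coords_separated_Ball_Half[OF _ a1]]
        inv_coords_separated_Half_Half[OF a1]
      by (cases Y) (simp_all add: valid_ball_def)
  qed
qed

section \<open>Six points on a circle\<close>

lemma cos_le_half_imp_bounds:
  fixes d :: real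
  assumes "0 < d" "d < 2 * pi" "cos d \<le> 1 / 2"
  shows "pi / 3 \<le> d \<and> d \<le> 5 * pi / 3"
proof (rule ccontr)
  assume "\<not> (pi / 3 \<le> d \<and> d \<le> 5 * pi / 3)"
  then consider "d < pi / 3" | "d > 5 * pi / 3" by linarith
  then show False
  proof cases
    case 1
    have "cos (pi / 3) < cos d" by (rule cos_monotone_0_pi) (use 1 assms in auto)
    then show False using assms cos_60 by simp
  next
    case 2
    have "cos (pi / 3) < cos (2 * pi - d)" by (rule cos_monotone_0_pi) (use 2 assms in auto)
    then show False using assms cos_60 by simp
  qed
qed

text \<open>Sorted increasingly, the six angles have five consecutive gaps of at least \<open>\<pi>/3\<close>
  each and a total spread of at most \<open>5\<pi>/3\<close>.\<close>

lemma regular_hexagon_if_cos_le_half: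
  fixes \<theta> :: "'a \<Rightarrow> real"
  assumes fin: "finite V" and card: "card V = 6"
    and range: "\<And>v. v \<in> V \<Longrightarrow> 0 \<le> \<theta> v \<and> \<theta> v < 2 * pi"
    and far: "\<And>v w. v \<in> V \<Longrightarrow> w \<in> V \<Longrightarrow> v \<noteq> w \<Longrightarrow> cos (\<theta> v - \<theta> w) \<le> 1 / 2"
  obtains g where "bij_betw g {..<6} V"
    and "\<And>i j. i < 6 \<Longrightarrow> j < 6 \<Longrightarrow> \<theta> (g i) - \<theta> (g j) = (real i - real j) * pi / 3"
proof -
  have inj: "inj_on \<theta> V"
  proof (rule inj_onI, rule ccontr)
    fix v w assume "v \<in> V" "w \<in> V" "\<theta> v = \<theta> w" "v \<noteq> w"
    then show False using far[of v w] by simp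
  qed
  define s where "s = sorted_list_of_set (\<theta> ` V)"
  have s: "length s = 6" "set s = \<theta> ` V" "sorted_wrt (<) s"
    using fin card inj by (simp_all add: s_def card_image)
  have gap: "pi / 3 \<le> s ! j - s ! i \<and> s ! j - s ! i \<le> 5 * pi / 3" if "i < j" "j < 6" for i j
  proof -
    have lt: "s ! i < s ! j" using sorted_wrt_nth_less[OF s(3) that(1)] that s(1) by simp
    have "s ! i \<in> \<theta> ` V" "s ! j \<in> \<theta> ` V" using that s by (metis nth_mem order.strict_trans)+
    then obtain v w where v: "v \<in> V" "s ! i = \<theta> v" and w: "w \<in> V" "s ! j = \<theta> w" by blast
    moreover have "w \<noteq> v" using v w lt by auto
    ultimately have "cos (\<theta> w - \<theta> v) \<le> 1 / 2" using far by simp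
    moreover have "\<theta> w - \<theta> v < 2 * pi" using range[OF v(1)] range[OF w(1)] by linarith
    ultimately show ?thesis using cos_le_half_imp_bounds[of "s ! j - s ! i"] lt v w by simp
  qed
  have s_nth: "s ! k = s ! 0 + real k * pi / 3" if "k < 6" for k
  proof -
    have "pi / 3 \<le> s ! 1 - s ! 0" "pi / 3 \<le> s ! 2 - s ! 1" "pi / 3 \<le> s ! 3 - s ! 2"
      "pi / 3 \<le> s ! 4 - s ! 3" "pi / 3 \<le> s ! 5 - s ! 4" "s ! 5 - s ! 0 \<le> 5 * pi / 3"
      using gap[of 0 1] gap[of 1 2] gap[of 2 3] gap[of 3 4] gap[of 4 5] gap[of 0 5] by simp_all
    then have "s ! 1 = s ! 0 + 1 * pi / 3" "s ! 2 = s ! 0 + 2 * pi / 3" "s ! 3 = s ! 0 + 3 * pi / 3"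
      "s ! 4 = s ! 0 + 4 * pi / 3" "s ! 5 = s ! 0 + 5 * pi / 3" by linarith+
    moreover have "k = 0 \<or> k = 1 \<or> k = 2 \<or> k = 3 \<or> k = 4 \<or> k = 5" using that by auto
    ultimately show ?thesis by auto
  qed
  define g where "g i = inv_into V \<theta> (s ! i)" for i
  have \<theta>_g: "\<theta> (g i) = s ! i" if "i < 6" for i
  proof -
    have "s ! i \<in> \<theta> ` V" using that s by (metis nth_mem)
    then show ?thesis unfolding g_def by (rule f_inv_into_f)
  qed
  show ?thesis
  proof (rule that)
    have "distinct s" using s(3) strict_sorted_iff by blast
    then have "bij_betw ((!) s) {..<6} (\<theta> ` V)"
      by (rule bij_betw_nth) (use s in \<open>simp_all add: lessThan_atLeast0\<close>)
    moreover have "bij_betw (inv_into V \<theta>) (\<theta> ` V) V"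
      using bij_betw_inv_into[of \<theta> V "\<theta> ` V"] inj by (simp add: bij_betw_def)
    ultimately show "bij_betw g {..<6} V" unfolding g_def using bij_betw_trans by (simp add: comp_def)
  next
    fix i j :: nat
    assume "i < 6" "j < 6"
    then show "\<theta> (g i) - \<theta> (g j) = (real i - real j) * pi / 3"
      unfolding \<theta>_g[OF \<open>i < 6\<close>] \<theta>_g[OF \<open>j < 6\<close>] s_nth[OF \<open>i < 6\<close>] s_nth[OF \<open>j < 6\<close>]
      by (simp add: left_diff_distrib diff_divide_distrib)
  qed
qed

lemma cycle_edges_6_iff:
  "cycle_edges 6 i j \<longleftrightarrow> i < 6 \<and> j < 6 \<and> (i = j + 1 \<or> j = i + 1 \<or> (i = 0 \<and> j = 5) \<or> (i = 5 \<and> j = 0))"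
  unfolding cycle_edges_def by (auto simp: mod_Suc)

lemma cos_hexagon_angle:
  assumes "i < 6" "j < 6" "i \<noteq> j"
  shows "cos ((real i - real j) * pi / 3) \<le> 1 / 2"
    and "cos ((real i - real j) * pi / 3) = 1 / 2 \<longleftrightarrow> cycle_edges 6 i j"
proof -
  have cos_k: "cos (real k * pi / 3) = (if k = 1 \<or> k = 5 then 1 / 2 else if k = 3 then -1 else -1 / 2)"
    if "k \<in> {1, 2, 3, 4, 5}" for k :: nat
  proof -
    have "cos (2 * pi / 3) = -1 / 2" using cos_pi_minus[of "pi / 3"] cos_60 by (simp add: diff_divide_distrib)
    moreover have "cos (4 * pi / 3) = -1 / 2" using cos_periodic_pi[of "pi / 3"] cos_60 by (simp add: field_simps)
    moreover have "cos (5 * pi / 3) = 1 / 2" using cos_2pi_minus[of "pi / 3"] cos_60 by (simp add: field_simps)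
    ultimately show ?thesis using that cos_60 by auto
  qed
  define k where "k = (if j \<le> i then i - j else j - i)"
  have "cos ((real i - real j) * pi / 3) = cos (real k * pi / 3)"
  proof (cases "j \<le> i")
    case False
    then have "(real i - real j) * pi / 3 = - (real k * pi / 3)" by (simp add: k_def of_nat_diff field_simps)
    then show ?thesis by (simp only: cos_minus)
  qed (simp add: k_def of_nat_diff)
  moreover have "k \<in> {1, 2, 3, 4, 5}" using assms by (auto simp: k_def)
  moreover have "cycle_edges 6 i j \<longleftrightarrow> k = 1 \<or> k = 5"
    using assms by (auto simp: cycle_edges_6_iff k_def)
  ultimately show "cos ((real i - real j) * pi / 3) \<le> 1 / 2"
    and "cos ((real i - real j) * pi / 3) = 1 / 2 \<longleftrightarrow> cycle_edges 6 i j"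
    using cos_k by auto
qed

section \<open>Lorentz geometry of a packing of a join\<close>

lemma exists_linear_dependence:
  fixes F :: "nat \<Rightarrow> 'a::euclidean_space"
  assumes "DIM('a) < n"
  obtains c where "\<exists>i<n. c i \<noteq> 0" "(\<Sum>i<n. c i *\<^sub>R F i) = 0"
proof (cases "inj_on F {..<n}")
  case False
  then obtain i j where ij: "i < n" "j < n" "i \<noteq> j" "F i = F j" unfolding inj_on_def by auto
  define c :: "nat \<Rightarrow> real" where "c k = (if k = i then 1 else 0) - (if k = j then 1 else 0)" for k
  have "c k *\<^sub>R F k = (if k = i then F i else 0) - (if k = j then F j else 0)" for k
    unfolding c_def using ij by (cases "k = i"; cases "k = j") auto
  then have "(\<Sum>k<n. c k *\<^sub>R F k) = (\<Sum>k<n. if k = i then F i else 0) - (\<Sum>k<n. if k = j then F j else 0)"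
    by (simp add: sum_subtractf)
  also have "\<dots> = 0" using ij by (simp add: sum.delta)
  finally show ?thesis using ij by (intro that[of c]) (auto simp: c_def)
next
  case True
  define S where "S = F ` {..<n}"
  have "finite S" "card S = n" using True by (simp_all add: S_def card_image)
  then have "dependent S" using independent_bound[of S] assms by auto
  then obtain u where u: "\<exists>v\<in>S. u v \<noteq> 0" "(\<Sum>v\<in>S. u v *\<^sub>R v) = 0"
    using dependent_finite[OF \<open>finite S\<close>] by auto
  have "(\<Sum>k<n. u (F k) *\<^sub>R F k) = (\<Sum>v\<in>S. u v *\<^sub>R v)"
    unfolding S_def using sum.reindex[OF True, of "\<lambda>v. u v *\<^sub>R v"] by (simp add: comp_def)
  then show ?thesis using u unfolding S_def by (intro that[of "u \<circ> F"]) auto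
qed

definition gram_det3 :: "real \<Rightarrow> real \<Rightarrow> real \<Rightarrow> real" where
  "gram_det3 \<alpha> \<beta> \<gamma> = 1 + 2 * \<alpha> * \<beta> * \<gamma> - \<alpha>\<^sup>2 - \<beta>\<^sup>2 - \<gamma>\<^sup>2"

lemma gram_det3_nonzero_imp_kernel_trivial:
  fixes \<alpha> \<beta> \<gamma> c1 c2 c3 :: real
  assumes "c1 + \<alpha> * c2 + \<beta> * c3 = 0" "\<alpha> * c1 + c2 + \<gamma> * c3 = 0" "\<beta> * c1 + \<gamma> * c2 + c3 = 0"
    and "gram_det3 \<alpha> \<beta> \<gamma> \<noteq> 0"
  shows "c1 = 0 \<and> c2 = 0 \<and> c3 = 0"
proof -
  \<comment> \<open>multiply the system by the adjugate of the Gram matrix\<close>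
  have "gram_det3 \<alpha> \<beta> \<gamma> * c1 = (1 - \<gamma>\<^sup>2) * (c1 + \<alpha> * c2 + \<beta> * c3)
      + (\<beta> * \<gamma> - \<alpha>) * (\<alpha> * c1 + c2 + \<gamma> * c3) + (\<alpha> * \<gamma> - \<beta>) * (\<beta> * c1 + \<gamma> * c2 + c3)"
    "gram_det3 \<alpha> \<beta> \<gamma> * c2 = (\<beta> * \<gamma> - \<alpha>) * (c1 + \<alpha> * c2 + \<beta> * c3)
      + (1 - \<beta>\<^sup>2) * (\<alpha> * c1 + c2 + \<gamma> * c3) + (\<alpha> * \<beta> - \<gamma>) * (\<beta> * c1 + \<gamma> * c2 + c3)"
    "gram_det3 \<alpha> \<beta> \<gamma> * c3 = (\<alpha> * \<gamma> - \<beta>) * (c1 + \<alpha> * c2 + \<beta> * c3)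
      + (\<alpha> * \<beta> - \<gamma>) * (\<alpha> * c1 + c2 + \<gamma> * c3) + (1 - \<alpha>\<^sup>2) * (\<beta> * c1 + \<gamma> * c2 + c3)"
    unfolding gram_det3_def by (simp_all add: power2_eq_square algebra_simps)
  then show ?thesis using assms by simp
qed

lemma gram_det3_negative:
  fixes \<alpha> \<beta> \<gamma> :: real
  assumes "\<alpha> \<le> -1" "\<beta> \<le> -1" "\<gamma> \<le> -1"
  shows "gram_det3 \<alpha> \<beta> \<gamma> < 0"
proof -
  define x y z where "x = -1 - \<alpha>" "y = -1 - \<beta>" "z = -1 - \<gamma>"
  have "x \<ge> 0" "y \<ge> 0" "z \<ge> 0" using assms by (simp_all add: x_y_z_def)
  moreover have "gram_det3 \<alpha> \<beta> \<gamma> = -4 - 4 * (x + y + z) - 2 * (x * y + y * z + x * z) - 2 * (x * y * z)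
      - (x * x + y * y + z * z)"
    unfolding gram_det3_def x_y_z_def by (simp add: power2_eq_square algebra_simps)
  ultimately show ?thesis
    by (smt (verit) mult_nonneg_nonneg zero_le_square)
qed

text \<open>\<open>l\<^sub>i = -N\<^sub>i / det G\<close> solves \<open>G l = -(1, 1, 1)\<close> by Cramer's rule, where \<open>N\<^sub>i\<close> are the
  row sums of the adjugate of the Gram matrix \<open>G\<close>.\<close>

lemma gram3_solution_sum_le_3:
  fixes \<alpha> \<beta> \<gamma> :: real
  assumes "\<alpha> \<le> -1" "\<beta> \<le> -1" "\<gamma> \<le> -1"
  obtains l1 l2 l3 where "l1 + \<alpha> * l2 + \<beta> * l3 = -1" "\<alpha> * l1 + l2 + \<gamma> * l3 = -1"
    "\<beta> * l1 + \<gamma> * l2 + l3 = -1" "l1 + l2 + l3 \<le> 3"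
    "l1 + l2 + l3 = 3 \<Longrightarrow> \<alpha> = -1 \<and> \<beta> = -1 \<and> \<gamma> = -1"
proof -
  define dt where "dt = gram_det3 \<alpha> \<beta> \<gamma>"
  have dt: "dt < 0" using gram_det3_negative[OF assms] by (simp add: dt_def)
  define N1 N2 N3 where
    "N1 = 1 - \<gamma>\<^sup>2 + \<beta> * \<gamma> - \<alpha> + \<alpha> * \<gamma> - \<beta>"
    "N2 = \<beta> * \<gamma> - \<alpha> + 1 - \<beta>\<^sup>2 + \<alpha> * \<beta> - \<gamma>"
    "N3 = \<alpha> * \<gamma> - \<beta> + \<alpha> * \<beta> - \<gamma> + 1 - \<alpha>\<^sup>2"
  have "N1 + \<alpha> * N2 + \<beta> * N3 = dt" "\<alpha> * N1 + N2 + \<gamma> * N3 = dt" "\<beta> * N1 + \<gamma> * N2 + N3 = dt"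
    unfolding N1_N2_N3_def dt_def gram_det3_def by (simp_all add: power2_eq_square algebra_simps)
  moreover have "- N1 / dt + \<alpha> * (- N2 / dt) + \<beta> * (- N3 / dt) = - (N1 + \<alpha> * N2 + \<beta> * N3) / dt"
    "\<alpha> * (- N1 / dt) + - N2 / dt + \<gamma> * (- N3 / dt) = - (\<alpha> * N1 + N2 + \<gamma> * N3) / dt"
    "\<beta> * (- N1 / dt) + \<gamma> * (- N2 / dt) + - N3 / dt = - (\<beta> * N1 + \<gamma> * N2 + N3) / dt"
    using dt by (simp_all add: field_simps)
  ultimately have eqs: "- N1 / dt + \<alpha> * (- N2 / dt) + \<beta> * (- N3 / dt) = -1"
    "\<alpha> * (- N1 / dt) + - N2 / dt + \<gamma> * (- N3 / dt) = -1"
    "\<beta> * (- N1 / dt) + \<gamma> * (- N2 / dt) + - N3 / dt = -1"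
    using dt by simp_all
  define x y z where "x = -1 - \<alpha>" "y = -1 - \<beta>" "z = -1 - \<gamma>"
  have xyz: "x \<ge> 0" "y \<ge> 0" "z \<ge> 0" using assms by (simp_all add: x_y_z_def)
  have sum: "N1 + N2 + N3 + 3 * dt = - 8 * (x + y + z) - 4 * (x * y + y * z + x * z)
      - 4 * (x * x + y * y + z * z) - 6 * (x * y * z)"
    unfolding N1_N2_N3_def dt_def gram_det3_def x_y_z_def by (simp add: power2_eq_square algebra_simps)
  have le: "N1 + N2 + N3 + 3 * dt \<le> 0"
    unfolding sum using xyz by (smt (verit) mult_nonneg_nonneg zero_le_square)
  have "- N1 / dt + - N2 / dt + - N3 / dt = - (N1 + N2 + N3) / dt" using dt by (simp add: field_simps)
  moreover have "- (N1 + N2 + N3) / dt \<le> 3" using le dt by (simp add: divide_le_eq)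
  moreover have "\<alpha> = -1 \<and> \<beta> = -1 \<and> \<gamma> = -1" if "- (N1 + N2 + N3) / dt = 3"
  proof -
    have "N1 + N2 + N3 + 3 * dt = 0" using that dt by (simp add: divide_eq_eq)
    then have "x + y + z = 0" unfolding sum using xyz by (smt (verit) mult_nonneg_nonneg zero_le_square)
    then show ?thesis using xyz unfolding x_y_z_def by linarith
  qed
  ultimately show ?thesis using that[OF eqs] by simp
qed

lemma lorentz_orthogonal_timelike_imp_spacelike:
  assumes t: "lorentz_inner t t < 0" and ut: "lorentz_inner u t = 0"
  shows "lorentz_inner u u \<ge> 0" and "lorentz_inner u u = 0 \<Longrightarrow> u = 0"
proof -
  obtain x m where u: "u = (x, m)" by (cases u)
  obtain p s where t_eq: "t = (p, s)" by (cases t)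
  have pp: "p \<bullet> p < s * s" and xp: "x \<bullet> p = m * s"
    using t ut unfolding u t_eq lorentz_inner_def by simp_all
  have ss: "s * s > 0" using pp by (metis inner_ge_zero order.strict_trans1)
  have "(m * m) * (s * s) = (x \<bullet> p)\<^sup>2" using xp by (simp add: power2_eq_square algebra_simps)
  also have "\<dots> \<le> (x \<bullet> x) * (p \<bullet> p)" by (rule Cauchy_Schwarz_ineq)
  finally have mm: "(m * m) * (s * s) \<le> (x \<bullet> x) * (p \<bullet> p)" .
  have uu: "lorentz_inner u u = x \<bullet> x - m * m" by (simp add: u lorentz_inner_def)
  have "(x \<bullet> x) * (p \<bullet> p) \<le> (x \<bullet> x) * (s * s)" using pp by (simp add: mult_left_mono)
  then have "(m * m) * (s * s) \<le> (x \<bullet> x) * (s * s)" using mm by linarith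
  then show "lorentz_inner u u \<ge> 0" using ss uu by (simp add: mult_le_cancel_right)
  assume "lorentz_inner u u = 0"
  have "x = 0"
  proof (rule ccontr)
    assume "x \<noteq> 0"
    then have "(x \<bullet> x) * (p \<bullet> p) < (x \<bullet> x) * (s * s)" using pp by simp
    then have "(m * m) * (s * s) < (x \<bullet> x) * (s * s)" using mm by linarith
    then have "m * m < x \<bullet> x" using ss by (simp add: mult_less_cancel_right)
    then show False using \<open>lorentz_inner u u = 0\<close> uu by simp
  qed
  then show "u = 0" using \<open>lorentz_inner u u = 0\<close> uu by (simp add: u zero_prod_def)
qed

lemma lorentz_orthogonal_to_five_eq_0:
  fixes A B C e f r :: lvec
  assumes unit: "lorentz_inner A A = 1" "lorentz_inner B B = 1" "lorentz_inner C C = 1"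
    and gram: "gram_det3 (lorentz_inner A B) (lorentz_inner A C) (lorentz_inner B C) \<noteq> 0"
    and ef: "lorentz_inner e e = 1" "lorentz_inner f f = 1" "lorentz_inner e f = 0"
    and e_orth: "lorentz_inner e A = 0" "lorentz_inner e B = 0" "lorentz_inner e C = 0"
    and f_orth: "lorentz_inner f A = 0" "lorentz_inner f B = 0" "lorentz_inner f C = 0"
    and r_orth: "lorentz_inner r A = 0" "lorentz_inner r B = 0" "lorentz_inner r C = 0"
      "lorentz_inner r e = 0" "lorentz_inner r f = 0"
  shows "r = 0"
proof -
  define F where "F k = [A, B, C, e, f, r] ! k" for k
  obtain c where c: "\<exists>i<6. c i \<noteq> 0" "(\<Sum>i<6. c i *\<^sub>R F i) = 0"
    using exists_linear_dependence[of 6 F] by auto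
  define s where "s = c 0 *\<^sub>R A + c 1 *\<^sub>R B + c 2 *\<^sub>R C + c 3 *\<^sub>R e + c 4 *\<^sub>R f + c 5 *\<^sub>R r"
  have "s = 0" using c(2) by (simp add: s_def F_def numeral_eq_Suc)
  then have "lorentz_inner s x = 0" for x by (simp add: lorentz_inner_simps)
  note products = this[of A] this[of B] this[of C] this[of e] this[of f]
  have sym: "lorentz_inner B A = lorentz_inner A B" "lorentz_inner C A = lorentz_inner A C"
    "lorentz_inner C B = lorentz_inner B C" "lorentz_inner f e = 0"
    using ef(3) by (simp_all add: lorentz_inner_commute)
  have "c 0 + lorentz_inner A B * c 1 + lorentz_inner A C * c 2 = 0"
    "lorentz_inner A B * c 0 + c 1 + lorentz_inner B C * c 2 = 0"
    "lorentz_inner A C * c 0 + lorentz_inner B C * c 1 + c 2 = 0"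
    using products unit e_orth f_orth r_orth sym
    by (simp_all add: s_def lorentz_inner_simps algebra_simps)
  then have c012: "c 0 = 0" "c 1 = 0" "c 2 = 0"
    using gram_det3_nonzero_imp_kernel_trivial gram by blast+
  then have c34: "c 3 = 0" "c 4 = 0"
    using products ef r_orth sym by (simp_all add: s_def lorentz_inner_simps)
  have "c 5 \<noteq> 0"
  proof
    assume "c 5 = 0"
    then have "\<forall>i<6. c i = 0" using c012 c34 by (auto simp: less_Suc_eq numeral_eq_Suc)
    then show False using c(1) by blast
  qed
  moreover have "c 5 *\<^sub>R r = 0" using \<open>s = 0\<close> c012 c34 by (simp add: s_def)
  ultimately show "r = 0" by simp
qed

lemma lorentz_equidistant_vector:
  assumes unit: "lorentz_inner A A = 1" "lorentz_inner B B = 1" "lorentz_inner C C = 1"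
    and obtuse: "lorentz_inner A B \<le> -1" "lorentz_inner A C \<le> -1" "lorentz_inner B C \<le> -1"
  obtains W where "lorentz_inner W A = -1" "lorentz_inner W B = -1" "lorentz_inner W C = -1"
    and "\<forall>x. lorentz_inner x A = -1 \<and> lorentz_inner x B = -1 \<and> lorentz_inner x C = -1 \<longrightarrow>
      lorentz_inner x W = lorentz_inner W W"
    and "lorentz_inner W W \<ge> -3"
    and "lorentz_inner W W = -3 \<Longrightarrow>
      lorentz_inner A B = -1 \<and> lorentz_inner A C = -1 \<and> lorentz_inner B C = -1"
proof -
  obtain l1 l2 l3 where l: "l1 + lorentz_inner A B * l2 + lorentz_inner A C * l3 = -1"
    "lorentz_inner A B * l1 + l2 + lorentz_inner B C * l3 = -1"
    "lorentz_inner A C * l1 + lorentz_inner B C * l2 + l3 = -1"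
    "l1 + l2 + l3 \<le> 3"
    "l1 + l2 + l3 = 3 \<Longrightarrow> lorentz_inner A B = -1 \<and> lorentz_inner A C = -1 \<and> lorentz_inner B C = -1"
    using gram3_solution_sum_le_3[OF obtuse] by blast
  define W where "W = l1 *\<^sub>R A + l2 *\<^sub>R B + l3 *\<^sub>R C"
  have prod: "lorentz_inner x W = l1 * lorentz_inner x A + l2 * lorentz_inner x B + l3 * lorentz_inner x C"
    for x by (simp add: W_def lorentz_inner_simps)
  have sym: "lorentz_inner B A = lorentz_inner A B" "lorentz_inner C A = lorentz_inner A C"
    "lorentz_inner C B = lorentz_inner B C"
    by (simp_all add: lorentz_inner_commute)
  have WA: "lorentz_inner W A = -1" "lorentz_inner W B = -1" "lorentz_inner W C = -1"
    using prod[of A] prod[of B] prod[of C] l(1-3) unit sym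
    by (simp_all add: lorentz_inner_commute[of W] algebra_simps)
  have equi: "lorentz_inner x W = - (l1 + l2 + l3)"
    if "lorentz_inner x A = -1" "lorentz_inner x B = -1" "lorentz_inner x C = -1" for x
    using prod[of x] that by simp
  show ?thesis
  proof (rule that[OF WA])
    show "\<forall>x. lorentz_inner x A = -1 \<and> lorentz_inner x B = -1 \<and> lorentz_inner x C = -1 \<longrightarrow>
        lorentz_inner x W = lorentz_inner W W"
      using equi equi[OF WA] by simp
    show "lorentz_inner W W \<ge> -3" "lorentz_inner W W = -3 \<Longrightarrow>
        lorentz_inner A B = -1 \<and> lorentz_inner A C = -1 \<and> lorentz_inner B C = -1"
      using equi[OF WA] l(4,5) by simp_all
  qed
qed

lemma eq_if_same_square_and_ne:
  fixes x y z :: real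
  assumes "x * x = y * y" "x * x = z * z" "x \<noteq> y" "x \<noteq> z"
  shows "y = z"
  using assms by (metis square_eq_iff)

lemma lorentz_orthogonal_expansion:
  fixes A B C e f u :: lvec
  assumes unit: "lorentz_inner A A = 1" "lorentz_inner B B = 1" "lorentz_inner C C = 1"
    and gram: "gram_det3 (lorentz_inner A B) (lorentz_inner A C) (lorentz_inner B C) \<noteq> 0"
    and ef: "lorentz_inner e e = 1" "lorentz_inner f f = 1" "lorentz_inner e f = 0"
    and e_orth: "lorentz_inner e A = 0" "lorentz_inner e B = 0" "lorentz_inner e C = 0"
    and f_orth: "lorentz_inner f A = 0" "lorentz_inner f B = 0" "lorentz_inner f C = 0"
    and u_orth: "lorentz_inner u A = 0" "lorentz_inner u B = 0" "lorentz_inner u C = 0"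
  shows "u = lorentz_inner u e *\<^sub>R e + lorentz_inner u f *\<^sub>R f"
proof -
  define r where "r = u - lorentz_inner u e *\<^sub>R e - lorentz_inner u f *\<^sub>R f"
  have "r = 0"
  proof (rule lorentz_orthogonal_to_five_eq_0[OF unit gram ef e_orth f_orth])
    show "lorentz_inner r A = 0" "lorentz_inner r B = 0" "lorentz_inner r C = 0"
      using u_orth e_orth f_orth by (simp_all add: r_def lorentz_inner_simps)
    show "lorentz_inner r e = 0" "lorentz_inner r f = 0"
      using ef by (simp_all add: r_def lorentz_inner_simps lorentz_inner_commute[of f e])
  qed
  then show ?thesis by (simp add: r_def algebra_simps)
qed

text \<open>The orthogonal complement of \<open>A, B, C\<close> is a Euclidean plane; three distinct vectors
  of equal norm in it cannot lie on one line, which yields an orthonormal basis.\<close>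

lemma lorentz_orthogonal_complement_basis:
  fixes U :: "'a \<Rightarrow> lvec"
  assumes timelike: "lorentz_inner (A + B + C) (A + B + C) < 0"
    and orth: "\<And>v. v \<in> V \<Longrightarrow>
      lorentz_inner (U v) A = 0 \<and> lorentz_inner (U v) B = 0 \<and> lorentz_inner (U v) C = 0"
    and norm: "\<And>v. v \<in> V \<Longrightarrow> lorentz_inner (U v) (U v) = \<rho>" and \<rho>: "\<rho> > 0"
    and three: "x \<in> V" "y \<in> V" "z \<in> V" "U x \<noteq> U y" "U x \<noteq> U z" "U y \<noteq> U z"
  obtains e f where "lorentz_inner e e = 1" "lorentz_inner f f = 1" "lorentz_inner e f = 0"
    and "lorentz_inner e A = 0" "lorentz_inner e B = 0" "lorentz_inner e C = 0"
    and "lorentz_inner f A = 0" "lorentz_inner f B = 0" "lorentz_inner f C = 0"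
proof -
  have sqrt_\<rho>: "sqrt \<rho> > 0" "sqrt \<rho> * sqrt \<rho> = \<rho>" using \<rho> by simp_all
  define e where "e = (1 / sqrt \<rho>) *\<^sub>R U x"
  have ee: "lorentz_inner e e = 1"
    using norm[OF three(1)] sqrt_\<rho> by (simp add: e_def lorentz_inner_simps field_simps)
  have e_orth: "lorentz_inner e A = 0" "lorentz_inner e B = 0" "lorentz_inner e C = 0"
    using orth[OF three(1)] by (simp_all add: e_def lorentz_inner_simps)
  define proj where "proj v = U v - lorentz_inner (U v) e *\<^sub>R e" for v
  have proj_orth: "lorentz_inner (proj v) A = 0" "lorentz_inner (proj v) B = 0"
    "lorentz_inner (proj v) C = 0" "lorentz_inner (proj v) e = 0" if "v \<in> V" for v
    using orth[OF that] e_orth ee by (simp_all add: proj_def lorentz_inner_simps)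
  obtain q where q: "q \<in> V" "proj q \<noteq> 0"
  proof -
    have "\<exists>q\<in>V. proj q \<noteq> 0"
    proof (rule ccontr)
      assume "\<not> (\<exists>q\<in>V. proj q \<noteq> 0)"
      then have on_line: "U v = lorentz_inner (U v) e *\<^sub>R e" if "v \<in> V" for v
        using that by (auto simp: proj_def)
      define k where "k v = lorentz_inner (U v) e" for v
      have k_sq: "k v * k v = \<rho>" if "v \<in> V" for v
        using norm[OF that] on_line[OF that] ee
        by (metis k_def lorentz_inner_scaleR_left lorentz_inner_scaleR_right mult.right_neutral)
      have k_ne: "k v \<noteq> k w" if "v \<in> V" "w \<in> V" "U v \<noteq> U w" for v w
        using on_line that unfolding k_def by metis
      show False
        using eq_if_same_square_and_ne[of "k x" "k y" "k z"] k_sq k_ne three by simp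
    qed
    then show ?thesis using that by blast
  qed
  have "lorentz_inner (proj q) (A + B + C) = 0" using proj_orth[OF q(1)] by (simp add: lorentz_inner_simps)
  then have "lorentz_inner (proj q) (proj q) > 0"
    using lorentz_orthogonal_timelike_imp_spacelike[OF timelike] q(2) by (metis order_le_less)
  moreover define n where "n = sqrt (lorentz_inner (proj q) (proj q))"
  ultimately have n: "n > 0" "n * n = lorentz_inner (proj q) (proj q)" by simp_all
  define f where "f = (1 / n) *\<^sub>R proj q"
  have "lorentz_inner f f = 1" using n(1) by (simp add: f_def lorentz_inner_simps flip: n(2))
  moreover have "lorentz_inner f A = 0" "lorentz_inner f B = 0" "lorentz_inner f C = 0"
    "lorentz_inner e f = 0"
    using proj_orth[OF q(1)] by (simp_all add: f_def lorentz_inner_simps lorentz_inner_commute[of e])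
  ultimately show ?thesis using that ee e_orth by blast
qed

lemma angles_if_orthonormal_expansion:
  fixes U :: "'a \<Rightarrow> lvec"
  assumes ef: "lorentz_inner e e = 1" "lorentz_inner f f = 1" "lorentz_inner e f = 0"
    and expansion: "\<And>v. v \<in> V \<Longrightarrow> U v = lorentz_inner (U v) e *\<^sub>R e + lorentz_inner (U v) f *\<^sub>R f"
    and norm: "\<And>v. v \<in> V \<Longrightarrow> lorentz_inner (U v) (U v) = \<rho>" and \<rho>: "\<rho> > 0"
  obtains \<theta> where "\<And>v. v \<in> V \<Longrightarrow> 0 \<le> \<theta> v \<and> \<theta> v < 2 * pi"
    and "\<And>v w. v \<in> V \<Longrightarrow> w \<in> V \<Longrightarrow> lorentz_inner (U v) (U w) = \<rho> * cos (\<theta> v - \<theta> w)"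
proof -
  define X Y where "X v = lorentz_inner (U v) e / sqrt \<rho>" "Y v = lorentz_inner (U v) f / sqrt \<rho>" for v
  have UU: "lorentz_inner (U v) (U w) = \<rho> * (X v * X w + Y v * Y w)" if "v \<in> V" "w \<in> V" for v w
  proof -
    have "lorentz_inner (U v) (U w) = lorentz_inner (U v) e * lorentz_inner (U w) e
        + lorentz_inner (U v) f * lorentz_inner (U w) f"
      by (subst expansion[OF that(2)]) (simp add: lorentz_inner_simps)
    then show ?thesis using \<rho> by (simp add: X_Y_def field_simps)
  qed
  have "(X v)\<^sup>2 + (Y v)\<^sup>2 = 1" if "v \<in> V" for v
    using UU[OF that that] norm[OF that] \<rho> by (simp add: power2_eq_square)
  then have "\<exists>t. 0 \<le> t \<and> t < 2 * pi \<and> X v = cos t \<and> Y v = sin t" if "v \<in> V" for v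
    using sincos_total_2pi that by metis
  then obtain \<theta> where \<theta>: "\<And>v. v \<in> V \<Longrightarrow> 0 \<le> \<theta> v \<and> \<theta> v < 2 * pi \<and> X v = cos (\<theta> v) \<and> Y v = sin (\<theta> v)"
    by metis
  show ?thesis
  proof (rule that)
    show "0 \<le> \<theta> v \<and> \<theta> v < 2 * pi" if "v \<in> V" for v using \<theta>[OF that] by simp
    show "lorentz_inner (U v) (U w) = \<rho> * cos (\<theta> v - \<theta> w)" if "v \<in> V" "w \<in> V" for v w
      using UU[OF that] \<theta>[OF that(1)] \<theta>[OF that(2)] by (simp add: cos_diff)
  qed
qed

text \<open>Here \<open>w = \<langle>W, W\<rangle>\<close> for the equidistant vector \<open>W\<close>; subtracting \<open>W\<close> moves the \<open>D v\<close> into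
  the orthogonal complement of \<open>A, B, C\<close>.\<close>

lemma lorentz_join_angles:
  fixes A B C :: lvec and D :: "'a \<Rightarrow> lvec"
  assumes unit: "lorentz_inner A A = 1" "lorentz_inner B B = 1" "lorentz_inner C C = 1"
    and obtuse: "lorentz_inner A B \<le> -1" "lorentz_inner A C \<le> -1" "lorentz_inner B C \<le> -1"
    and D_unit: "\<And>v. v \<in> V \<Longrightarrow> lorentz_inner (D v) (D v) = 1"
    and D_tangent: "\<And>v. v \<in> V \<Longrightarrow>
      lorentz_inner (D v) A = -1 \<and> lorentz_inner (D v) B = -1 \<and> lorentz_inner (D v) C = -1"
    and D_obtuse: "\<And>v w. v \<in> V \<Longrightarrow> w \<in> V \<Longrightarrow> v \<noteq> w \<Longrightarrow> lorentz_inner (D v) (D w) \<le> -1"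
    and three: "x \<in> V" "y \<in> V" "z \<in> V" "x \<noteq> y" "x \<noteq> z" "y \<noteq> z"
  obtains w \<theta> where "-3 \<le> w" "w < 1"
    and "w = -3 \<Longrightarrow> lorentz_inner A B = -1 \<and> lorentz_inner A C = -1 \<and> lorentz_inner B C = -1"
    and "\<And>v. v \<in> V \<Longrightarrow> 0 \<le> \<theta> v \<and> \<theta> v < 2 * pi"
    and "\<And>v v'. v \<in> V \<Longrightarrow> v' \<in> V \<Longrightarrow> lorentz_inner (D v) (D v') = w + (1 - w) * cos (\<theta> v - \<theta> v')"
proof -
  obtain W where W: "lorentz_inner W A = -1" "lorentz_inner W B = -1" "lorentz_inner W C = -1"
    and equidistant: "\<forall>x. lorentz_inner x A = -1 \<and> lorentz_inner x B = -1 \<and> lorentz_inner x C = -1 \<longrightarrow>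
      lorentz_inner x W = lorentz_inner W W"
    and W_ge: "lorentz_inner W W \<ge> -3"
    and W_eq: "lorentz_inner W W = -3 \<Longrightarrow>
      lorentz_inner A B = -1 \<and> lorentz_inner A C = -1 \<and> lorentz_inner B C = -1"
    using lorentz_equidistant_vector[OF unit obtuse] by blast
  define \<rho> where "\<rho> = 1 - lorentz_inner W W"
  define U where "U v = D v - W" for v
  have U_orth: "lorentz_inner (U v) A = 0 \<and> lorentz_inner (U v) B = 0 \<and> lorentz_inner (U v) C = 0"
    if "v \<in> V" for v
    using D_tangent[OF that] W by (simp add: U_def lorentz_inner_simps)
  have UU: "lorentz_inner (U v) (U v') = lorentz_inner (D v) (D v') - lorentz_inner W W"
    if "v \<in> V" "v' \<in> V" for v v'
    using spec[OF equidistant, of "D v"] spec[OF equidistant, of "D v'"] D_tangent[OF that(1)]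
      D_tangent[OF that(2)]
    by (simp add: U_def lorentz_inner_simps lorentz_inner_commute[of W "D v'"])
  have U_norm: "lorentz_inner (U v) (U v) = \<rho>" if "v \<in> V" for v
    using UU[OF that that] D_unit[OF that] by (simp add: \<rho>_def)
  have U_obtuse: "lorentz_inner (U v) (U v') \<le> \<rho> - 2" if "v \<in> V" "v' \<in> V" "v \<noteq> v'" for v v'
    using UU[OF that(1,2)] D_obtuse[OF that] by (simp add: \<rho>_def)
  have timelike: "lorentz_inner (A + B + C) (A + B + C) < 0"
    using unit obtuse lorentz_inner_commute[of B A] lorentz_inner_commute[of C A]
      lorentz_inner_commute[of C B]
    by (simp add: lorentz_inner_simps)
  have spacelike: "lorentz_inner (U v) (U v) \<ge> 0" "lorentz_inner (U v) (U v) = 0 \<Longrightarrow> U v = 0"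
    if "v \<in> V" for v
    using lorentz_orthogonal_timelike_imp_spacelike[OF timelike, of "U v"] U_orth[OF that]
    by (simp_all add: lorentz_inner_simps)
  have "\<rho> > 0"
  proof -
    have "\<rho> \<noteq> 0"
    proof
      assume "\<rho> = 0"
      then have "U x = 0" using spacelike(2)[OF three(1)] U_norm[OF three(1)] by simp
      then show False using U_obtuse[OF three(1,2,4)] \<open>\<rho> = 0\<close> by (simp add: lorentz_inner_simps)
    qed
    then show ?thesis using spacelike(1)[OF three(1)] U_norm[OF three(1)] by simp
  qed
  have U_ne: "U v \<noteq> U v'" if "v \<in> V" "v' \<in> V" "v \<noteq> v'" for v v'
  proof
    assume "U v = U v'"
    then show False using U_obtuse[OF that] U_norm[OF that(1)] by simp
  qed
  have gram: "gram_det3 (lorentz_inner A B) (lorentz_inner A C) (lorentz_inner B C) \<noteq> 0"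
    using gram_det3_negative[OF obtuse] by simp
  obtain e f where ef: "lorentz_inner e e = 1" "lorentz_inner f f = 1" "lorentz_inner e f = 0"
    and e_orth: "lorentz_inner e A = 0" "lorentz_inner e B = 0" "lorentz_inner e C = 0"
    and f_orth: "lorentz_inner f A = 0" "lorentz_inner f B = 0" "lorentz_inner f C = 0"
    using lorentz_orthogonal_complement_basis[where U=U and \<rho>=\<rho> and x=x and y=y and z=z,
        OF timelike U_orth U_norm \<open>\<rho> > 0\<close> three(1-3)
        U_ne[OF three(1,2,4)] U_ne[OF three(1,3,5)] U_ne[OF three(2,3,6)]]
    by blast
  have expansion: "U v = lorentz_inner (U v) e *\<^sub>R e + lorentz_inner (U v) f *\<^sub>R f" if "v \<in> V" for v
    using lorentz_orthogonal_expansion[OF unit gram ef e_orth f_orth] U_orth[OF that] by blast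
  obtain \<theta> where \<theta>: "\<And>v. v \<in> V \<Longrightarrow> 0 \<le> \<theta> v \<and> \<theta> v < 2 * pi"
    and U_cos: "\<And>v v'. v \<in> V \<Longrightarrow> v' \<in> V \<Longrightarrow> lorentz_inner (U v) (U v') = \<rho> * cos (\<theta> v - \<theta> v')"
    using angles_if_orthonormal_expansion[where U=U, OF ef expansion U_norm \<open>\<rho> > 0\<close>] by blast
  show ?thesis
  proof (rule that[of "lorentz_inner W W" \<theta>])
    show "-3 \<le> lorentz_inner W W" "lorentz_inner W W < 1" using W_ge \<open>\<rho> > 0\<close> by (simp_all add: \<rho>_def)
    show "lorentz_inner W W = -3 \<Longrightarrow>
        lorentz_inner A B = -1 \<and> lorentz_inner A C = -1 \<and> lorentz_inner B C = -1"
      by (rule W_eq)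
    show "0 \<le> \<theta> v \<and> \<theta> v < 2 * pi" if "v \<in> V" for v using \<theta>[OF that] .
    show "lorentz_inner (D v) (D v') = lorentz_inner W W + (1 - lorentz_inner W W) * cos (\<theta> v - \<theta> v')"
      if "v \<in> V" "v' \<in> V" for v v'
      using UU[OF that] U_cos[OF that] by (simp add: \<rho>_def)
  qed
qed

lemma lorentz_hexagon_configuration:
  fixes A B C :: lvec and D :: "'a \<Rightarrow> lvec"
  assumes fin: "finite V" and card: "card V = 6"
    and unit: "lorentz_inner A A = 1" "lorentz_inner B B = 1" "lorentz_inner C C = 1"
    and obtuse: "lorentz_inner A B \<le> -1" "lorentz_inner A C \<le> -1" "lorentz_inner B C \<le> -1"
    and D_unit: "\<And>v. v \<in> V \<Longrightarrow> lorentz_inner (D v) (D v) = 1"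
    and D_tangent: "\<And>v. v \<in> V \<Longrightarrow>
      lorentz_inner (D v) A = -1 \<and> lorentz_inner (D v) B = -1 \<and> lorentz_inner (D v) C = -1"
    and D_obtuse: "\<And>v w. v \<in> V \<Longrightarrow> w \<in> V \<Longrightarrow> v \<noteq> w \<Longrightarrow> lorentz_inner (D v) (D w) \<le> -1"
  shows "lorentz_inner A B = -1 \<and> lorentz_inner A C = -1 \<and> lorentz_inner B C = -1"
    and "\<exists>g. bij_betw g {..<6} V \<and>
      (\<forall>i<6. \<forall>j<6. i \<noteq> j \<longrightarrow> (lorentz_inner (D (g i)) (D (g j)) = -1 \<longleftrightarrow> cycle_edges 6 i j))"
proof -
  obtain h where h: "bij_betw h {..<6::nat} V"
    using ex_bij_betw_nat_finite[OF fin] card by (auto simp: lessThan_atLeast0)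
  have "h i \<noteq> h j" if "i < 6" "j < 6" "i \<noteq> j" for i j
    using h that by (auto simp: bij_betw_def inj_on_def)
  moreover have "h i \<in> V" if "i < 6" for i using h that by (auto simp: bij_betw_def)
  ultimately have three: "h 0 \<in> V" "h 1 \<in> V" "h 2 \<in> V" "h 0 \<noteq> h 1" "h 0 \<noteq> h 2" "h 1 \<noteq> h 2"
    by simp_all
  obtain w \<theta> where "-3 \<le> w" "w < 1"
    and w_eq: "w = -3 \<Longrightarrow> lorentz_inner A B = -1 \<and> lorentz_inner A C = -1 \<and> lorentz_inner B C = -1"
    and \<theta>: "\<And>v. v \<in> V \<Longrightarrow> 0 \<le> \<theta> v \<and> \<theta> v < 2 * pi"
    and D_cos: "\<And>v v'. v \<in> V \<Longrightarrow> v' \<in> V \<Longrightarrow> lorentz_inner (D v) (D v') = w + (1 - w) * cos (\<theta> v - \<theta> v')"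
    using lorentz_join_angles[where D=D, OF unit obtuse D_unit D_tangent D_obtuse three] by blast
  define \<rho> where "\<rho> = 1 - w"
  have "\<rho> > 0" "\<rho> \<le> 4" using \<open>w < 1\<close> \<open>-3 \<le> w\<close> by (simp_all add: \<rho>_def)
  have D_cos': "lorentz_inner (D v) (D v') = w + \<rho> * cos (\<theta> v - \<theta> v')" if "v \<in> V" "v' \<in> V" for v v'
    using D_cos[OF that] by (simp add: \<rho>_def)
  have cos_le: "cos (\<theta> v - \<theta> v') \<le> 1 / 2" if "v \<in> V" "v' \<in> V" "v \<noteq> v'" for v v'
  proof (rule ccontr)
    assume "\<not> cos (\<theta> v - \<theta> v') \<le> 1 / 2"
    then have "\<rho> * (1 / 2) < \<rho> * cos (\<theta> v - \<theta> v')" using \<open>\<rho> > 0\<close> by simp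
    then show False using D_cos'[OF that(1,2)] D_obtuse[OF that] \<open>\<rho> \<le> 4\<close> \<rho>_def by linarith
  qed
  obtain g where g: "bij_betw g {..<6} V"
    and g_angle: "\<And>i j. i < 6 \<Longrightarrow> j < 6 \<Longrightarrow> \<theta> (g i) - \<theta> (g j) = (real i - real j) * pi / 3"
    using regular_hexagon_if_cos_le_half[where \<theta>=\<theta>, OF fin card \<theta> cos_le] by blast
  have gV: "g i \<in> V" if "i < 6" for i using g that by (auto simp: bij_betw_def)
  have "\<theta> (g 1) - \<theta> (g 0) = pi / 3" using g_angle[of 1 0] by simp
  then have half: "\<rho> * cos (\<theta> (g 1) - \<theta> (g 0)) = \<rho> * (1 / 2)" by (simp only: cos_60)
  have "g i \<noteq> g j" if "i < 6" "j < 6" "i \<noteq> j" for i j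
    using g that by (auto simp: bij_betw_def inj_on_def)
  then have adjacent: "g 1 \<in> V" "g 0 \<in> V" "g 1 \<noteq> g 0" using gV by simp_all
  have "\<rho> = 4"
    using D_cos'[OF adjacent(1,2)] D_obtuse[OF adjacent] half \<open>\<rho> \<le> 4\<close> \<rho>_def by linarith
  then have "w = -3" by (simp add: \<rho>_def)
  then show "lorentz_inner A B = -1 \<and> lorentz_inner A C = -1 \<and> lorentz_inner B C = -1"
    by (rule w_eq)
  have "lorentz_inner (D (g i)) (D (g j)) = -1 \<longleftrightarrow> cycle_edges 6 i j"
    if "i < 6" "j < 6" "i \<noteq> j" for i j
    using D_cos[OF gV gV, of i j] g_angle[of i j] that \<open>w = -3\<close> cos_hexagon_angle(2)[OF that] by auto
  then show "\<exists>g. bij_betw g {..<6} V \<and>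
      (\<forall>i<6. \<forall>j<6. i \<noteq> j \<longrightarrow> (lorentz_inner (D (g i)) (D (g j)) = -1 \<longleftrightarrow> cycle_edges 6 i j))"
    using g by blast
qed

section \<open>A packing of \<open>C\<^sub>6 \<star> C\<^sub>3\<close>\<close>

definition vec3 :: "real \<Rightarrow> real \<Rightarrow> real \<Rightarrow> real^3" where
  "vec3 a b c = vector [a, b, c]"

lemma inner_vec3: "vec3 a b c \<bullet> vec3 a' b' c' = a * a' + b * b' + c * c'"
  unfolding vec3_def by (simp add: inner_vec_def sum_3)

lemma dist_vec3_power2: "(dist (vec3 a b c) (vec3 a' b' c'))\<^sup>2 = (a - a')\<^sup>2 + (b - b')\<^sup>2 + (c - c')\<^sup>2"
proof -
  have "vec3 a b c - vec3 a' b' c' = vec3 (a - a') (b - b') (c - c')"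
    unfolding vec3_def by (simp add: vec_eq_iff forall_3)
  then show ?thesis unfolding dist_norm power2_norm_eq_inner by (simp add: inner_vec3 power2_eq_square)
qed

text \<open>The packing of \<open>C\<^sub>6 \<star> C\<^sub>3\<close>: six unit balls centred on a circle of radius 2 at height 1,
  sandwiched between the half-spaces \<open>z \<le> 0\<close> and \<open>z \<ge> 2\<close>, around a unit ball centred
  on the axis.\<close>

definition axis :: "real^3" where
  "axis = vec3 0 0 1"

definition hexagon_centre :: "nat \<Rightarrow> real^3" where
  "hexagon_centre k = vec3 (2 * cos (real k * pi / 3)) (2 * sin (real k * pi / 3)) 1"

fun C6_join_C3_packing :: "nat + nat \<Rightarrow> ball3" where
  "C6_join_C3_packing (Inl k) = Ball (hexagon_centre k) 1"
| "C6_join_C3_packing (Inr k) =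
    (if k = 0 then Half axis 0 else if k = 1 then Half (- axis) (-2) else Ball axis 1)"

lemma axis_simps: "axis \<bullet> axis = 1" "axis \<bullet> hexagon_centre k = 1" "norm axis = 1" "axis \<noteq> 0"
proof -
  show "axis \<bullet> axis = 1" "axis \<bullet> hexagon_centre k = 1"
    by (simp_all add: axis_def hexagon_centre_def inner_vec3)
  then show "norm axis = 1" "axis \<noteq> 0" by (auto simp: norm_eq_1)
qed

lemma dist_hexagon_centre_axis: "dist (hexagon_centre k) axis = 2"
proof -
  define t where "t = real k * pi / 3"
  have "(dist (hexagon_centre k) axis)\<^sup>2 = (2 * cos t)\<^sup>2 + (2 * sin t)\<^sup>2"
    unfolding hexagon_centre_def axis_def dist_vec3_power2 t_def by simp
  also have "\<dots> = 4 * ((sin t)\<^sup>2 + (cos t)\<^sup>2)"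
    by (simp add: power_mult_distrib algebra_simps del: sin_cos_squared_add sin_cos_squared_add2)
  finally have "(dist (hexagon_centre k) axis)\<^sup>2 = 2\<^sup>2" by simp
  then show ?thesis by (rule power2_eq_imp_eq) simp_all
qed

lemma dist_hexagon_centres:
  assumes "k < 6" "l < 6" "k \<noteq> l"
  shows "dist (hexagon_centre k) (hexagon_centre l) \<ge> 2"
    and "dist (hexagon_centre k) (hexagon_centre l) = 2 \<longleftrightarrow> cycle_edges 6 k l"
proof -
  define a b where "a = real k * pi / 3" "b = real l * pi / 3"
  have ab: "a - b = (real k - real l) * pi / 3" by (simp add: a_b_def left_diff_distrib diff_divide_distrib)
  have "(dist (hexagon_centre k) (hexagon_centre l))\<^sup>2 = (2 * cos a - 2 * cos b)\<^sup>2 + (2 * sin a - 2 * sin b)\<^sup>2"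
    unfolding hexagon_centre_def dist_vec3_power2 a_b_def by simp
  also have "\<dots> = 4 * ((cos a)\<^sup>2 + (sin a)\<^sup>2) + 4 * ((cos b)\<^sup>2 + (sin b)\<^sup>2) - 8 * (cos a * cos b + sin a * sin b)"
    by (simp add: power2_eq_square algebra_simps del: sin_cos_squared_add sin_cos_squared_add2 sin_cos_squared_add3)
  also have "\<dots> = 8 - 8 * cos ((real k - real l) * pi / 3)" unfolding ab[symmetric] by (simp add: cos_diff)
  finally have sq: "(dist (hexagon_centre k) (hexagon_centre l))\<^sup>2 = 8 - 8 * cos ((real k - real l) * pi / 3)" .
  then have "2\<^sup>2 \<le> (dist (hexagon_centre k) (hexagon_centre l))\<^sup>2"
    using cos_hexagon_angle(1)[OF assms] by simp
  then show "dist (hexagon_centre k) (hexagon_centre l) \<ge> 2" by (rule power2_le_imp_le) simp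
  have "dist (hexagon_centre k) (hexagon_centre l) = 2 \<longleftrightarrow> (dist (hexagon_centre k) (hexagon_centre l))\<^sup>2 = 2\<^sup>2"
    by (rule power2_eq_iff_nonneg[symmetric]) simp_all
  then show "dist (hexagon_centre k) (hexagon_centre l) = 2 \<longleftrightarrow> cycle_edges 6 k l"
    unfolding sq cos_hexagon_angle(2)[OF assms, symmetric] by auto
qed

lemma ball_set_Ball_ne_Half: "ball_set (Ball c r) \<noteq> ball_set (Half a b)"
  by auto

lemma ball_set_ne_if_interiors_disjoint_Ball_Ball:
  assumes "r1 > 0" "r2 > 0" "interiors_disjoint (Ball c1 r1) (Ball c2 r2)"
  shows "ball_set (Ball c1 r1) \<noteq> ball_set (Ball c2 r2)"
proof
  assume "ball_set (Ball c1 r1) = ball_set (Ball c2 r2)"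
  moreover have "Some c1 \<in> ball_set (Ball c1 r1)" using \<open>r1 > 0\<close> by simp
  ultimately have "dist c2 c1 \<le> r2" by auto
  then show False using interiors_disjoint_Ball_Ball_iff assms by (simp add: dist_commute)
qed

lemma touching_Ball_Ball:
  assumes "r1 > 0" "r2 > 0" "dist c1 c2 = r1 + r2"
  shows "interiors_disjoint (Ball c1 r1) (Ball c2 r2) \<and> tangent (Ball c1 r1) (Ball c2 r2)"
  using assms interiors_disjoint_Ball_Ball_iff tangent_Ball_Ball_iff by simp

lemma touching_Ball_Half:
  assumes "r > 0" "a \<noteq> 0" "r * norm a = a \<bullet> c - b"
  shows "interiors_disjoint (Ball c r) (Half a b) \<and> tangent (Ball c r) (Half a b)"
  using assms interiors_disjoint_Ball_Half_iff tangent_Ball_Half_iff by simp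

abbreviation C6_join_C3_verts :: "(nat + nat) set" where
  "C6_join_C3_verts \<equiv> join_verts (cycle_verts 6) (cycle_verts 3)"

abbreviation C6_join_C3_edges :: "nat + nat \<Rightarrow> nat + nat \<Rightarrow> bool" where
  "C6_join_C3_edges \<equiv> join_edges (cycle_verts 6) (cycle_edges 6) (cycle_verts 3) (cycle_edges 3)"

lemma join_edges_commute:
  assumes "\<And>x y. E x y \<longleftrightarrow> E y x" "\<And>x y. F x y \<longleftrightarrow> F y x"
  shows "join_edges V E W F x y \<longleftrightarrow> join_edges V E W F y x"
  using assms by (cases x; cases y) auto

lemma cycle_edges_commute: "cycle_edges n x y \<longleftrightarrow> cycle_edges n y x"
  unfolding cycle_edges_def by auto

lemma C6_join_C3_edges_commute: "C6_join_C3_edges x y \<longleftrightarrow> C6_join_C3_edges y x"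
  by (rule join_edges_commute[OF cycle_edges_commute cycle_edges_commute])

lemma touching_axis_balls:
  assumes "axis \<bullet> c = 1"
  shows "interiors_disjoint (Ball c 1) (Half axis 0) \<and> tangent (Ball c 1) (Half axis 0)"
    and "interiors_disjoint (Ball c 1) (Half (- axis) (-2)) \<and> tangent (Ball c 1) (Half (- axis) (-2))"
  using assms axis_simps touching_Ball_Half[of 1 axis c 0] touching_Ball_Half[of 1 "- axis" c "-2"]
  by simp_all

lemma packed_pair_C6_join_C3_Inl_Inl:
  assumes "k < 6" "l < 6" "k \<noteq> l"
  shows "packed_pair C6_join_C3_edges C6_join_C3_packing (Inl k) (Inl l)"
proof -
  have d: "1 + 1 \<le> dist (hexagon_centre k) (hexagon_centre l)"
    using dist_hexagon_centres(1)[OF assms] by simp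
  then have "interiors_disjoint (Ball (hexagon_centre k) 1) (Ball (hexagon_centre l) 1)"
    by (simp add: interiors_disjoint_Ball_Ball_iff)
  moreover have "tangent (Ball (hexagon_centre k) 1) (Ball (hexagon_centre l) 1) \<longleftrightarrow> cycle_edges 6 k l"
    using tangent_Ball_Ball_iff[OF _ _ d] dist_hexagon_centres(2)[OF assms] by simp
  ultimately show ?thesis
    using ball_set_ne_if_interiors_disjoint_Ball_Ball assms by (simp add: packed_pair_def cycle_verts_def)
qed

lemma packed_pair_C6_join_C3_Inl_Inr:
  assumes "k < 6" "i < 3"
  shows "packed_pair C6_join_C3_edges C6_join_C3_packing (Inl k) (Inr i)"
proof -
  have edge: "C6_join_C3_edges (Inl k) (Inr i)" using assms by (simp add: cycle_verts_def)
  consider "i = 0" | "i = 1" | "i = 2" using \<open>i < 3\<close> by linarith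
  then show ?thesis
  proof cases
    case 1
    then show ?thesis using edge touching_axis_balls(1) axis_simps ball_set_Ball_ne_Half
      by (simp add: packed_pair_def del: ball_set.simps)
  next
    case 2
    then show ?thesis using edge touching_axis_balls(2) axis_simps ball_set_Ball_ne_Half
      by (simp add: packed_pair_def del: ball_set.simps)
  next
    case 3
    have "interiors_disjoint (Ball (hexagon_centre k) 1) (Ball axis 1) \<and>
        tangent (Ball (hexagon_centre k) 1) (Ball axis 1)"
      using touching_Ball_Ball[of 1 1 "hexagon_centre k" axis] dist_hexagon_centre_axis by simp
    then show ?thesis using edge 3 ball_set_ne_if_interiors_disjoint_Ball_Ball[of 1 1]
      by (simp add: packed_pair_def)
  qed
qed

lemma packed_pair_C6_join_C3_Inr_Inr:
  assumes "i < 3" "j < 3" "i \<noteq> j"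
  shows "packed_pair C6_join_C3_edges C6_join_C3_packing (Inr i) (Inr j)"
proof -
  have "packed_pair C6_join_C3_edges C6_join_C3_packing (Inr 0) (Inr 1)"
  proof -
    have "Some 0 \<in> ball_set (Half axis 0)" "Some 0 \<notin> ball_set (Half (- axis) (-2))" by auto
    moreover have "interiors_disjoint (Half axis 0) (Half (- axis) (-2))"
      "tangent (Half axis 0) (Half (- axis) (-2))"
      using axis_simps interiors_disjoint_Half_Half_iff[of axis "- axis" 0 "-2"]
        tangent_Half_Half_iff[of axis "- axis" 0 "-2"]
      by (simp_all add: sgn_minus)
    ultimately show ?thesis by (auto simp: packed_pair_def cycle_verts_def cycle_edges_def)
  qed
  moreover have "packed_pair C6_join_C3_edges C6_join_C3_packing (Inr 2) (Inr 0)"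
    "packed_pair C6_join_C3_edges C6_join_C3_packing (Inr 2) (Inr 1)"
    using touching_axis_balls[of axis] axis_simps ball_set_Ball_ne_Half
    by (simp_all add: packed_pair_def cycle_verts_def cycle_edges_def del: ball_set.simps)
  moreover have "(i, j) \<in> {(0, 1), (1, 0), (2, 0), (0, 2), (2, 1), (1, 2)}" using assms by auto
  ultimately show ?thesis using packed_pair_commute[OF C6_join_C3_edges_commute] by auto
qed

lemma ball_packing_C6_join_C3: "ball_packing C6_join_C3_verts C6_join_C3_edges C6_join_C3_packing"
proof (rule ball_packingI)
  show "valid_ball (C6_join_C3_packing v)" for v
    using axis_simps by (cases v) (auto simp: valid_ball_def)
  fix x y assume "x \<in> C6_join_C3_verts" "y \<in> C6_join_C3_verts" "x \<noteq> y"
  then consider (ll) k l where "x = Inl k" "y = Inl l" "k < 6" "l < 6" "k \<noteq> l"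
    | (lr) k i where "x = Inl k" "y = Inr i" "k < 6" "i < 3"
    | (rl) k i where "x = Inr i" "y = Inl k" "k < 6" "i < 3"
    | (rr) i j where "x = Inr i" "y = Inr j" "i < 3" "j < 3" "i \<noteq> j"
    by (cases x; cases y) (auto simp: join_verts_def cycle_verts_def)
  then show "packed_pair C6_join_C3_edges C6_join_C3_packing x y"
  proof cases
    case rl
    then show ?thesis
      using packed_pair_commute[OF C6_join_C3_edges_commute packed_pair_C6_join_C3_Inl_Inr] by simp
  qed (simp_all add: packed_pair_C6_join_C3_Inl_Inl packed_pair_C6_join_C3_Inl_Inr
      packed_pair_C6_join_C3_Inr_Inr)
qed

section \<open>Packable joins of a 6-vertex and a 3-vertex graph\<close>

lemma ball_packable_if_graph_iso:
  assumes iso: "graph_iso V E W F" and packable: "ball_packable W F"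
  shows "ball_packable V E"
proof -
  obtain h where h: "bij_betw h V W" and hE: "\<forall>x\<in>V. \<forall>y\<in>V. E x y \<longleftrightarrow> F (h x) (h y)"
    using iso unfolding graph_iso_def by blast
  obtain f where f: "ball_packing W F f" using packable unfolding ball_packable_iff by blast
  have "ball_packing V E (f \<circ> h)"
  proof (rule ball_packingI)
    show "valid_ball ((f \<circ> h) v)" if "v \<in> V" for v
      using that f h by (auto simp: ball_packing_def bij_betw_def)
    fix v w assume "v \<in> V" "w \<in> V" "v \<noteq> w"
    moreover from this have "h v \<in> W" "h w \<in> W" "h v \<noteq> h w"
      using h by (auto simp: bij_betw_def inj_on_def)
    ultimately show "packed_pair E (f \<circ> h) v w"
      using f hE unfolding ball_packing_def packed_pair_def inj_on_def by auto
  qed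
  then show ?thesis unfolding ball_packable_iff by blast
qed

lemma graph_iso_join:
  assumes p: "bij_betw p V W" and q: "bij_betw q V' W'"
    and pE: "\<forall>x\<in>V. \<forall>y\<in>V. E x y \<longleftrightarrow> F (p x) (p y)"
    and qE: "\<forall>x\<in>V'. \<forall>y\<in>V'. E' x y \<longleftrightarrow> F' (q x) (q y)"
  shows "graph_iso (join_verts V V') (join_edges V E V' E') (join_verts W W') (join_edges W F W' F')"
  unfolding graph_iso_def
proof (intro exI conjI ballI)
  have "inj_on (map_sum p q) (join_verts V V')"
  proof (rule inj_onI)
    fix x y assume "x \<in> join_verts V V'" "y \<in> join_verts V V'" "map_sum p q x = map_sum p q y"
    then show "x = y"
      using p q unfolding join_verts_def bij_betw_def inj_on_def by (cases x; cases y) auto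
  qed
  moreover have "map_sum p q ` join_verts V V' = Inl ` (p ` V) \<union> Inr ` (q ` V')"
    unfolding join_verts_def by (simp add: image_Un image_image)
  moreover have "\<dots> = join_verts W W'" using p q by (simp add: join_verts_def bij_betw_def)
  ultimately show "bij_betw (map_sum p q) (join_verts V V') (join_verts W W')"
    unfolding bij_betw_def by simp
  fix x y assume "x \<in> join_verts V V'" "y \<in> join_verts V V'"
  moreover have "p a \<in> W" if "a \<in> V" for a using p that by (auto simp: bij_betw_def)
  moreover have "q a \<in> W'" if "a \<in> V'" for a using q that by (auto simp: bij_betw_def)
  ultimately show "join_edges V E V' E' x y = join_edges W F W' F' (map_sum p q x) (map_sum p q y)"
    using pE qE by (auto simp: join_verts_def)
qed

lemma cycle_edges_3_iff:
  assumes "i < 3" "j < 3"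
  shows "cycle_edges 3 i j \<longleftrightarrow> i \<noteq> j"
proof -
  have "i = 0 \<or> i = 1 \<or> i = 2" "j = 0 \<or> j = 1 \<or> j = 2" using assms by linarith+
  then show ?thesis by (elim disjE) (simp_all add: cycle_edges_def)
qed

text \<open>A third ball rules out a ball and its own exterior, whose coordinates are antipodal.\<close>

lemma ball_packing_inv_coords:
  assumes packing: "ball_packing V E f" and v: "v \<in> V"
  defines "L x y \<equiv> lorentz_inner (inv_coords (f x)) (inv_coords (f y))"
  shows "L v v = 1"
    and "w \<in> V \<Longrightarrow> v \<noteq> w \<Longrightarrow> L v w \<le> -1"
    and "w \<in> V \<Longrightarrow> v \<noteq> w \<Longrightarrow> u \<in> V \<Longrightarrow> u \<noteq> v \<Longrightarrow> u \<noteq> w \<Longrightarrow> E v w \<longleftrightarrow> L v w = -1"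
proof -
  have separated: "inv_coords_separated (f x) (f y)" if "x \<in> V" "y \<in> V" "x \<noteq> y" for x y
    using packing that by (auto simp: ball_packing_def intro: interiors_disjoint_imp_inv_coords_separated)
  show "L v v = 1" using packing v by (simp add: L_def ball_packing_def lorentz_inner_inv_coords_self)
  show "L v w \<le> -1" if "w \<in> V" "v \<noteq> w" for w
    using separated[OF v that] by (simp add: L_def inv_coords_separated_def)
  assume w: "w \<in> V" "v \<noteq> w" and u: "u \<in> V" "u \<noteq> v" "u \<noteq> w"
  have "inv_coords (f v) \<noteq> - inv_coords (f w)"
  proof
    assume "inv_coords (f v) = - inv_coords (f w)"
    then have "L u v = - L u w" by (simp add: L_def lorentz_inner_minus_right)
    moreover have "L u v \<le> -1" "L u w \<le> -1"
      using separated[OF u(1) v u(2)] separated[OF u(1) w(1) u(3)]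
      by (simp_all add: L_def inv_coords_separated_def)
    ultimately show False by simp
  qed
  then show "E v w \<longleftrightarrow> L v w = -1"
    using separated[OF v w] packing v w by (auto simp: L_def inv_coords_separated_def ball_packing_def)
qed

lemma join_6_3_packing_structure:
  fixes V6 :: "'a set" and V3 :: "'b set"
  assumes c6: "card V6 = 6" and c3: "card V3 = 3"
    and packing: "ball_packing (join_verts V6 V3) (join_edges V6 E6 V3 E3) f"
  shows "\<forall>x\<in>V3. \<forall>y\<in>V3. x \<noteq> y \<longrightarrow> E3 x y"
    and "\<exists>g. bij_betw g {..<6} V6 \<and> (\<forall>i<6. \<forall>j<6. i \<noteq> j \<longrightarrow> (E6 (g i) (g j) \<longleftrightarrow> cycle_edges 6 i j))"
proof -
  define J where "J = join_verts V6 V3"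
  define L where "L x y = lorentz_inner (inv_coords (f x)) (inv_coords (f y))" for x y
  note coords = ball_packing_inv_coords[OF packing, folded J_def L_def]
  obtain a b c where V3: "V3 = {a, b, c}" and abc: "a \<noteq> b" "b \<noteq> c" "a \<noteq> c"
    using c3 unfolding card_3_iff by blast
  have J: "Inl v \<in> J \<longleftrightarrow> v \<in> V6" "Inr x \<in> J \<longleftrightarrow> x \<in> V3" for v x by (auto simp: J_def join_verts_def)
  have "Inr a \<in> J" "Inr b \<in> J" "Inr c \<in> J" using J V3 by simp_all
  moreover have "(Inr a :: 'a + 'b) \<noteq> Inr b" "(Inr a :: 'a + 'b) \<noteq> Inr c" "(Inr b :: 'a + 'b) \<noteq> Inr c"
    using abc by simp_all
  ultimately have "\<exists>u\<in>J. u \<noteq> p \<and> u \<noteq> q" for p q by metis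
  then have tangent_iff: "join_edges V6 E6 V3 E3 p q \<longleftrightarrow> L p q = -1" if "p \<in> J" "q \<in> J" "p \<noteq> q" for p q
    using coords(3)[OF that(1,2,3)] by blast
  have unit: "L p p = 1" if "p \<in> J" for p using coords(1)[OF that] .
  have obtuse: "L p q \<le> -1" if "p \<in> J" "q \<in> J" "p \<noteq> q" for p q
    using coords(2)[OF that] .
  have "finite V6" using c6 card.infinite by fastforce
  note configuration = lorentz_hexagon_configuration[OF this c6,
      of "inv_coords (f (Inr a))" "inv_coords (f (Inr b))" "inv_coords (f (Inr c))"
      "\<lambda>v. inv_coords (f (Inl v))", folded L_def]
  have hyps: "L (Inr a) (Inr a) = 1" "L (Inr b) (Inr b) = 1" "L (Inr c) (Inr c) = 1"
      "L (Inr a) (Inr b) \<le> -1" "L (Inr a) (Inr c) \<le> -1" "L (Inr b) (Inr c) \<le> -1"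
    using unit obtuse J abc V3 by auto
  have join_tangent: "L (Inl v) (Inr x) = -1" if "v \<in> V6" "x \<in> V3" for v x
    using tangent_iff[of "Inl v" "Inr x"] J that by simp
  have "L (Inl v) (Inl v) = 1" "L (Inl v) (Inr a) = -1 \<and> L (Inl v) (Inr b) = -1 \<and> L (Inl v) (Inr c) = -1"
    if "v \<in> V6" for v
    using unit J join_tangent that V3 by simp_all
  moreover have "L (Inl v) (Inl w) \<le> -1" if "v \<in> V6" "w \<in> V6" "v \<noteq> w" for v w
    using obtuse J that by auto
  ultimately have abc_tangent: "L (Inr a) (Inr b) = -1 \<and> L (Inr a) (Inr c) = -1 \<and> L (Inr b) (Inr c) = -1"
    and "\<exists>g. bij_betw g {..<6} V6 \<and>
      (\<forall>i<6. \<forall>j<6. i \<noteq> j \<longrightarrow> (L (Inl (g i)) (Inl (g j)) = -1 \<longleftrightarrow> cycle_edges 6 i j))"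
    using configuration[OF hyps] by blast+
  then obtain g where g: "bij_betw g {..<6} V6"
    and g_cycle: "\<forall>i<6. \<forall>j<6. i \<noteq> j \<longrightarrow> (L (Inl (g i)) (Inl (g j)) = -1 \<longleftrightarrow> cycle_edges 6 i j)"
    by blast
  have L_commute: "L p q = L q p" for p q by (simp add: L_def lorentz_inner_commute)
  have "E3 x y" if "x \<in> V3" "y \<in> V3" "x \<noteq> y" for x y
  proof -
    have "L (Inr x) (Inr y) = -1" using abc_tangent that V3 L_commute by auto
    then show ?thesis using tangent_iff[of "Inr x" "Inr y"] J that by simp
  qed
  then show "\<forall>x\<in>V3. \<forall>y\<in>V3. x \<noteq> y \<longrightarrow> E3 x y" by blast
  have "E6 (g i) (g j) \<longleftrightarrow> cycle_edges 6 i j" if "i < 6" "j < 6" "i \<noteq> j" for i j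
  proof -
    have "g i \<in> V6" "g j \<in> V6" "g i \<noteq> g j" using g that by (auto simp: bij_betw_def inj_on_def)
    then show ?thesis using tangent_iff[of "Inl (g i)" "Inl (g j)"] g_cycle that J by simp
  qed
  then show "\<exists>g. bij_betw g {..<6} V6 \<and> (\<forall>i<6. \<forall>j<6. i \<noteq> j \<longrightarrow> (E6 (g i) (g j) \<longleftrightarrow> cycle_edges 6 i j))"
    using g by blast
qed

lemma graph_iso_C6_join_C3:
  assumes s6: "simple_graph V6 E6" and s3: "simple_graph V3 E3" and c3: "card V3 = 3"
    and complete: "\<forall>x\<in>V3. \<forall>y\<in>V3. x \<noteq> y \<longrightarrow> E3 x y"
    and g: "bij_betw g {..<6} V6"
    and g_cycle: "\<forall>i<6. \<forall>j<6. i \<noteq> j \<longrightarrow> (E6 (g i) (g j) \<longleftrightarrow> cycle_edges 6 i j)"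
  shows "graph_iso (join_verts V6 V3) (join_edges V6 E6 V3 E3) C6_join_C3_verts C6_join_C3_edges"
proof -
  define p where "p = inv_into {..<6} g"
  have "bij_betw p V6 (cycle_verts 6)"
    unfolding p_def cycle_verts_def using bij_betw_inv_into[OF g] by (simp add: lessThan_atLeast0)
  moreover have "\<forall>x\<in>V6. \<forall>y\<in>V6. E6 x y \<longleftrightarrow> cycle_edges 6 (p x) (p y)"
  proof (intro ballI)
    fix x y assume "x \<in> V6" "y \<in> V6"
    then have "p x < 6" "p y < 6" "g (p x) = x" "g (p y) = y"
      using g unfolding p_def bij_betw_def by (auto intro: inv_into_into f_inv_into_f)
    show "E6 x y \<longleftrightarrow> cycle_edges 6 (p x) (p y)"
    proof (cases "x = y")
      case True
      then show ?thesis using s6 by (auto simp: simple_graph_def cycle_edges_def)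
    next
      case False
      then have "p x \<noteq> p y" using \<open>g (p x) = x\<close> \<open>g (p y) = y\<close> by metis
      then have "E6 (g (p x)) (g (p y)) \<longleftrightarrow> cycle_edges 6 (p x) (p y)"
        using g_cycle \<open>p x < 6\<close> \<open>p y < 6\<close> by blast
      then show ?thesis using \<open>g (p x) = x\<close> \<open>g (p y) = y\<close> by simp
    qed
  qed
  moreover obtain q where q: "bij_betw q V3 {0..<3::nat}"
    using ex_bij_betw_finite_nat[of V3] c3 card.infinite by fastforce
  moreover have "\<forall>x\<in>V3. \<forall>y\<in>V3. E3 x y \<longleftrightarrow> cycle_edges 3 (q x) (q y)"
  proof (intro ballI)
    fix x y assume xy: "x \<in> V3" "y \<in> V3"
    then have "q x < 3" "q y < 3" "q x = q y \<longleftrightarrow> x = y"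
      using q unfolding bij_betw_def inj_on_def by auto
    then show "E3 x y \<longleftrightarrow> cycle_edges 3 (q x) (q y)"
    proof (cases "x = y")
      case True
      then show ?thesis using s3 by (auto simp: simple_graph_def cycle_edges_def)
    next
      case False
      then show ?thesis
        using complete xy \<open>q x < 3\<close> \<open>q y < 3\<close> \<open>q x = q y \<longleftrightarrow> x = y\<close> by (simp add: cycle_edges_3_iff)
    qed
  qed
  ultimately show ?thesis using graph_iso_join[of p V6 "cycle_verts 6" q V3 "cycle_verts 3"]
    by (simp add: cycle_verts_def)
qed

theorem corollary3p9:
  fixes V6 :: "'a set" and E6 :: "'a \<Rightarrow> 'a \<Rightarrow> bool"
    and V3 :: "'b set" and E3 :: "'b \<Rightarrow> 'b \<Rightarrow> bool"
  assumes "simple_graph V6 E6" and "card V6 = 6"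
    and "simple_graph V3 E3" and "card V3 = 3"
  shows "ball_packable (join_verts V6 V3) (join_edges V6 E6 V3 E3) \<longleftrightarrow>
         graph_iso (join_verts V6 V3) (join_edges V6 E6 V3 E3)
           (join_verts (cycle_verts 6) (cycle_verts 3))
           (join_edges (cycle_verts 6) (cycle_edges 6) (cycle_verts 3) (cycle_edges 3))"
proof
  assume "ball_packable (join_verts V6 V3) (join_edges V6 E6 V3 E3)"
  then obtain f where f: "ball_packing (join_verts V6 V3) (join_edges V6 E6 V3 E3) f"
    unfolding ball_packable_iff by blast
  obtain g where "bij_betw g {..<6} V6"
    and "\<forall>i<6. \<forall>j<6. i \<noteq> j \<longrightarrow> (E6 (g i) (g j) \<longleftrightarrow> cycle_edges 6 i j)"
    using join_6_3_packing_structure(2)[OF assms(2,4) f] by blast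
  then show "graph_iso (join_verts V6 V3) (join_edges V6 E6 V3 E3) C6_join_C3_verts C6_join_C3_edges"
    by (rule graph_iso_C6_join_C3[OF assms(1,3,4) join_6_3_packing_structure(1)[OF assms(2,4) f]])
next
  assume "graph_iso (join_verts V6 V3) (join_edges V6 E6 V3 E3) C6_join_C3_verts C6_join_C3_edges"
  then show "ball_packable (join_verts V6 V3) (join_edges V6 E6 V3 E3)"
    using ball_packable_if_graph_iso ball_packing_C6_join_C3 ball_packable_iff by blast
qed

end
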